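(* Let $T_2=\frac12\log\big(\det(W_\gamma)/\det(W_{\gamma^0})\big)$ and let $0<\underline\phi_n\le\bar\phi_n$. (a) Suppose that, for some $C_3>0$ and $\delta\ge0$, $\inf_{\gamma\in S_1}\lambda_-\big(\frac1nX_{\gamma\setminus\gamma^0}^T(I_n-P_{\gamma^0})X_{\gamma\setminus\gamma^0}\big)\ge C_3n^{-\delta}$. Then for every $\gamma\in S_1$ and all $c_1,\dots,c_p\in[\underline\phi_n,\bar\phi_n]$, $T_2\ge\frac12(|\gamma|-s_n)\log(1+C_3n^{1-\delta}\underline\phi_n)$. (b) Suppose $\gamma^0\ne\emptyset$ and $\varphi_{\max}(n)\le C_2$ for a constant $C_2>0$. Then for every $\gamma\in S_2$ and all $c_1,\dots,c_p\in[\underline\phi_n,\bar\phi_n]$, $T_2\ge-\frac12s_n\log(1+C_2n\bar\phi_n)$.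
   Context: $X$ is an $n\times p$ matrix with $X_\gamma^TX_\gamma$ invertible for every state vector $\gamma$; $\beta^0\in\mathbb R^p$. A state vector is $\gamma\in\{0,1\}^p$; $|\gamma|$ its number of ones; $X_\gamma$ the columns of $X$ indexed by $\{j:\gamma_j=1\}$. $\gamma^0_j=I(\beta^0_j\ne0)$, $s_n=|\gamma^0|$, $\emptyset$ the zero vector. $\gamma\setminus\gamma'$ has $j$-th entry $I(\gamma_j=1,\gamma'_j=0)$; $\gamma\subset\gamma'$ means $\gamma\setminus\gamma'=0$. $P_\gamma=X_\gamma(X_\gamma^TX_\gamma)^{-1}X_\gamma^T$, $P_\emptyset=0$. $S_1=\{\gamma:\gamma^0\subset\gamma,\gamma\neq\gamma^0\}$, $S_2=\{\gamma:\gamma^0\not\subset\gamma\}$. $\lambda_\pm$ are largest/smallest eigenvalues; $\varphi_{\max}(n)=\max_{\gamma\in S_2}\lambda_+\big(\frac1nX_{\gamma^0\setminus\gamma}^TX_{\gamma^0\setminus\gamma}\big)$. With hyperparameters $c_j>0$, $\Sigma=\mathrm{diag}(c_1,\dots,c_p)$, $\Sigma_\gamma$ its diagonal submatrix indexed by $\gamma$, $U_\gamma=\Sigma_\gamma^{-1}+X_\gamma^TX_\gamma$, $W_\gamma=\Sigma_\gamma^{1/2}U_\gamma\Sigma_\gamma^{1/2}$, with conventions $X_\emptyset=0$, $\Sigma_\emptyset=U_\emptyset=W_\emptyset=1$. *)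

theory Defs
  imports "Jordan_Normal_Form.DL_Submatrix" "Jordan_Normal_Form.Char_Poly"
begin

(* State vectors gamma in {0,1}^p are represented by their support sets
   gamma \<subseteq> {..<p}; |gamma| = card gamma. *)

definition state_vectors :: "nat \<Rightarrow> nat set set" where
  "state_vectors p = Pow {..<p}"

definition gamma0 :: "real vec \<Rightarrow> nat set" where
  "gamma0 \<beta>0 = {j. j < dim_vec \<beta>0 \<and> \<beta>0 $ j \<noteq> 0}"

definition Xsub :: "real mat \<Rightarrow> nat set \<Rightarrow> real mat" where
  "Xsub X \<gamma> = submatrix X UNIV \<gamma>"

definition minv :: "real mat \<Rightarrow> real mat" where
  "minv A = (SOME B. B \<in> carrier_mat (dim_row A) (dim_row A) \<and>
               A * B = 1\<^sub>m (dim_row A) \<and> B * A = 1\<^sub>m (dim_row A))"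

definition Proj :: "real mat \<Rightarrow> nat set \<Rightarrow> real mat" where
  "Proj X \<gamma> = (if \<gamma> = {} then 0\<^sub>m (dim_row X) (dim_row X)
     else Xsub X \<gamma> * minv (transpose_mat (Xsub X \<gamma>) * Xsub X \<gamma>) * transpose_mat (Xsub X \<gamma>))"

definition S1 :: "nat \<Rightarrow> nat set \<Rightarrow> nat set set" where
  "S1 p g0 = {\<gamma> \<in> state_vectors p. g0 \<subseteq> \<gamma> \<and> \<gamma> \<noteq> g0}"

definition S2 :: "nat \<Rightarrow> nat set \<Rightarrow> nat set set" where
  "S2 p g0 = {\<gamma> \<in> state_vectors p. \<not> g0 \<subseteq> \<gamma>}"

definition lambda_max :: "real mat \<Rightarrow> real" where
  "lambda_max A = Max {k. eigenvalue A k}"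

definition lambda_min :: "real mat \<Rightarrow> real" where
  "lambda_min A = Min {k. eigenvalue A k}"

definition phi_max :: "real mat \<Rightarrow> real vec \<Rightarrow> real" where
  "phi_max X \<beta>0 = Max ((\<lambda>\<gamma>. lambda_max ((1 / real (dim_row X)) \<cdot>\<^sub>m
       (transpose_mat (Xsub X (gamma0 \<beta>0 - \<gamma>)) * Xsub X (gamma0 \<beta>0 - \<gamma>))))
       ` S2 (dim_col X) (gamma0 \<beta>0))"

definition Sigma_pow :: "(nat \<Rightarrow> real) \<Rightarrow> real \<Rightarrow> nat set \<Rightarrow> real mat" where
  "Sigma_pow c a \<gamma> = mat_diag (card \<gamma>) (\<lambda>i. c (pick \<gamma> i) powr a)"

definition Sigma :: "(nat \<Rightarrow> real) \<Rightarrow> nat set \<Rightarrow> real mat" where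
  "Sigma c \<gamma> = mat_diag (card \<gamma>) (\<lambda>i. c (pick \<gamma> i))"

definition Umat :: "real mat \<Rightarrow> (nat \<Rightarrow> real) \<Rightarrow> nat set \<Rightarrow> real mat" where
  "Umat X c \<gamma> = minv (Sigma c \<gamma>) + transpose_mat (Xsub X \<gamma>) * Xsub X \<gamma>"

(* W_gamma = Sigma^{1/2} U Sigma^{1/2}; for gamma = {} this is the 0x0 matrix, det = 1 *)
definition Wmat :: "real mat \<Rightarrow> (nat \<Rightarrow> real) \<Rightarrow> nat set \<Rightarrow> real mat" where
  "Wmat X c \<gamma> = Sigma_pow c (1/2) \<gamma> * Umat X c \<gamma> * Sigma_pow c (1/2) \<gamma>"

definition T2 :: "real mat \<Rightarrow> real vec \<Rightarrow> (nat \<Rightarrow> real) \<Rightarrow> nat set \<Rightarrow> real" where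
  "T2 X \<beta>0 c \<gamma> = 1/2 * ln (det (Wmat X c \<gamma>) / det (Wmat X c (gamma0 \<beta>0)))"

end

theory Submission
  imports Defs "Jordan_Normal_Form.Schur_Decomposition"
    "HOL-Computational_Algebra.Fundamental_Theorem_Algebra"
begin

(* Put Z_g = X_g Sigma_g^(1/2) and K_g = Z_g Z_g^T = sum_(j in g) c_j x_j x_j^T.  Then
   W_g = I + Z_g^T Z_g, and Sylvester's identity det (I + A B) = det (I + B A) gives
   det W_g = det (I_n + K_g).  For disjoint A, D we have K_(A u D) = K_A + K_D, whence
     det (I + K_(A u D)) = det (I + K_A) * det (I + Z_D^T (I + K_A)^(-1) Z_D).
   (a) Take A = g0, D = g - g0.  The resolvent (I + K_g0)^(-1) dominates the projection
       I - P_g0 (which annihilates K_g0), so the quadratic form of the second factor is at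
       least (1 + n C3 n^(-delta) phi_lo) |v|^2, and its determinant at least that to the |D|.
   (b) Take A = g n g0.  Both W_g and W_g0 split over A; the factor for g is >= 1 and the
       factor for g0 is <= (1 + n C2 phi_hi)^|g0 - g|, because the resolvent is <= I. *)

lemma conjugate_real_vec [simp]: "conjugate (v :: real vec) = v"
  by (rule eq_vecI, auto simp: conjugate_vec_def)

lemma mat_diag_mult_vec:
  assumes y: "y \<in> carrier_vec k"
  shows "mat_diag k d *\<^sub>v y = vec k (\<lambda>i. d i * y $ i)"
proof (rule eq_vecI)
  fix i assume "i < dim_vec (vec k (\<lambda>i. d i * y $ i))"
  hence i: "i < k" by simp
  have "(mat_diag k d *\<^sub>v y) $ i = (\<Sum>j\<in>{0..<k}. (if i = j then d j else 0) * y $ j)"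
    using i y by (simp add: mat_diag_def scalar_prod_def)
  also have "\<dots> = d i * y $ i" using i by (subst sum.remove[of _ i], auto)
  finally show "(mat_diag k d *\<^sub>v y) $ i = vec k (\<lambda>i. d i * y $ i) $ i" using i by simp
qed (insert y, auto simp: mat_diag_def)

lemma sum_squares_vec: "v \<in> carrier_vec k \<Longrightarrow> v \<bullet> v = (\<Sum>t<k. ((v :: real vec) $ t)^2)"
  by (auto simp: scalar_prod_def lessThan_atLeast0 power2_eq_square)

lemma mult3_mat_vec:
  assumes "A \<in> carrier_mat k k" "B \<in> carrier_mat k k" "C \<in> carrier_mat k k" "y \<in> carrier_vec k"
  shows "(A * B * C) *\<^sub>v y = A *\<^sub>v (B *\<^sub>v (C *\<^sub>v y))"
  using assms by (simp add: assoc_mult_mat_vec[of _ k k _ k])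

(* A real symmetric matrix is Hermitian over the complex numbers, hence every complex
   eigenvalue is real: a * <v,v> = <v,Mv> = conj a * <v,v>. *)
lemma real_symmetric_eigenvalue_real:
  fixes M :: "real mat"
  assumes M: "M \<in> carrier_mat n n" and sym: "transpose_mat M = M"
    and v: "v \<in> carrier_vec n" and v0: "v \<noteq> 0\<^sub>v n"
    and Mv: "map_mat complex_of_real M *\<^sub>v v = a \<cdot>\<^sub>v v"
  shows "cnj a = a"
proof -
  have row: "(\<Sum>j<n. of_real (M $$ (i,j)) * v $ j) = a * v $ i" if i: "i < n" for i
  proof -
    have "(map_mat complex_of_real M *\<^sub>v v) $ i = (a \<cdot>\<^sub>v v) $ i" using Mv by simp
    thus ?thesis using i M v by (simp add: scalar_prod_def lessThan_atLeast0)
  qed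
  define N where "N = (\<Sum>i<n. cnj (v $ i) * v $ i)"
  define s where "s = (\<Sum>i<n. \<Sum>j<n. cnj (v $ i) * of_real (M $$ (i,j)) * v $ j)"
  have s_eq: "s = a * N"
  proof -
    have "s = (\<Sum>i<n. cnj (v $ i) * (\<Sum>j<n. of_real (M $$ (i,j)) * v $ j))"
      unfolding s_def by (simp add: sum_distrib_left mult.assoc)
    also have "\<dots> = (\<Sum>i<n. cnj (v $ i) * (a * v $ i))" using row by simp
    finally show ?thesis unfolding N_def by (simp add: sum_distrib_left algebra_simps)
  qed
  have Mij: "M $$ (i,j) = M $$ (j,i)" if "i < n" "j < n" for i j
    using arg_cong[OF sym, of "\<lambda>A. A $$ (j,i)"] M that by auto
  have s_real: "cnj s = s"
  proof -
    have "cnj s = (\<Sum>i<n. \<Sum>j<n. v $ i * of_real (M $$ (i,j)) * cnj (v $ j))"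
      unfolding s_def by simp
    also have "\<dots> = (\<Sum>j<n. \<Sum>i<n. v $ i * of_real (M $$ (i,j)) * cnj (v $ j))"
      by (rule sum.swap)
    also have "\<dots> = s" unfolding s_def
      by (intro sum.cong refl, simp add: Mij mult.commute mult.left_commute)
    finally show ?thesis .
  qed
  have N_real: "cnj N = N" unfolding N_def by (simp add: mult.commute)
  have N0: "N \<noteq> 0"
  proof
    assume "N = 0"
    have "N = of_real (\<Sum>i<n. (cmod (v $ i))^2)" unfolding N_def
      by (simp add: complex_norm_square mult.commute del: of_real_power)
    hence "(\<Sum>i<n. (cmod (v $ i))^2) = 0" using \<open>N = 0\<close> by (metis of_real_eq_0_iff)
    hence "\<forall>i\<in>{..<n}. (cmod (v $ i))^2 = 0" by (subst (asm) sum_nonneg_eq_0_iff) auto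
    hence "v = 0\<^sub>v n" using v by (intro eq_vecI) auto
    thus False using v0 by simp
  qed
  have "cnj a * N = a * N" using s_eq s_real N_real by (metis complex_cnj_mult)
  thus ?thesis using N0 by simp
qed

(* By the fundamental theorem of algebra the characteristic polynomial has a complex root,
   which is real by the previous lemma, so it is a real eigenvalue. *)
lemma real_symmetric_eigenvector:
  fixes M :: "real mat"
  assumes M: "M \<in> carrier_mat n n" and sym: "transpose_mat M = M" and n: "n > 0"
  shows "\<exists>e v. v \<in> carrier_vec n \<and> v \<noteq> 0\<^sub>v n \<and> M *\<^sub>v v = e \<cdot>\<^sub>v v"
proof -
  let ?C = "map_mat complex_of_real M"
  have C: "?C \<in> carrier_mat n n" using M by auto
  have cp: "char_poly ?C = map_poly of_real (char_poly M)"
    by (rule of_real_hom.char_poly_hom[OF M])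
  have "degree (char_poly ?C) = n" using degree_monic_char_poly[OF C] by auto
  hence "\<not> constant (poly (char_poly ?C))" using n constant_degree[of "char_poly ?C"] by simp
  then obtain a where a: "poly (char_poly ?C) a = 0" using fundamental_theorem_of_algebra by blast
  hence "eigenvalue ?C a" using eigenvalue_root_char_poly[OF C] by auto
  then obtain v where "eigenvector ?C v a" unfolding eigenvalue_def by auto
  hence "v \<in> carrier_vec n" "v \<noteq> 0\<^sub>v n" "?C *\<^sub>v v = a \<cdot>\<^sub>v v"
    unfolding eigenvector_def using M by auto
  hence "cnj a = a" by (rule real_symmetric_eigenvalue_real[OF M sym])
  hence aR: "a = of_real (Re a)" by (metis complex_is_Real_iff Reals_cnj_iff of_real_Re)
  have "of_real (poly (char_poly M) (Re a)) = poly (char_poly ?C) a"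
    unfolding cp by (subst aR, simp add: of_real_hom.poly_map_poly)
  hence "poly (char_poly M) (Re a) = 0" using a by simp
  hence "eigenvalue M (Re a)" using eigenvalue_root_char_poly[OF M] by auto
  then obtain w where "eigenvector M w (Re a)" unfolding eigenvalue_def by auto
  thus ?thesis unfolding eigenvector_def using M by auto
qed

(* Every unit vector is the first column of an orthogonal matrix (basis completion followed
   by Gram-Schmidt and normalisation). *)
lemma orthonormal_completion:
  fixes u :: "real vec"
  assumes u: "u \<in> carrier_vec m" and u1: "u \<bullet> u = 1"
  shows "\<exists>W. W \<in> carrier_mat m m \<and> transpose_mat W * W = 1\<^sub>m m \<and> col W 0 = u"
proof -
  interpret cof_vec_space m "TYPE(real)" .
  have u0: "u \<noteq> 0\<^sub>v m" using u1 u by auto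
  define b where "b = basis_completion u"
  from basis_completion[OF u u0, folded b_def]
  have b: "set b \<subseteq> carrier_vec m" and dist_b: "distinct b"
    and indep: "\<not> lin_dep (set b)" and len_b: "length b = m" and hdb: "hd b = u" by auto
  have m0: "m > 0" using u0 u by (cases m, auto)
  from hdb len_b m0 obtain vs where bv: "b = u # vs" by (cases b, auto)
  define ws where "ws = gram_schmidt m b"
  from gram_schmidt_result[OF b dist_b indep ws_def]
  have ws: "set ws \<subseteq> carrier_vec m" "corthogonal ws" "length ws = m" by (auto simp: len_b)
  have "hd ws = u" unfolding ws_def bv using u by simp
  hence ws0: "ws ! 0 = u" using ws(3) m0 by (cases ws, auto)
  have orth: "ws ! i \<bullet> ws ! j = 0 \<longleftrightarrow> i \<noteq> j" if "i < m" "j < m" for i j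
    using corthogonalD[OF ws(2), of i j] that ws(3) by simp
  have sq_pos: "ws ! i \<bullet> ws ! i > 0" if "i < m" for i
    using conjugate_square_greater_0_vec[of "ws ! i" m] orth[OF that that] ws that
    by (metis conjugate_real_vec nth_mem scalar_prod_left_zero subsetD zero_carrier_vec)
  define ws' where "ws' = map (\<lambda>w. (1 / sqrt (w \<bullet> w)) \<cdot>\<^sub>v w) ws"
  have ws'_car: "ws' ! i \<in> carrier_vec m" if "i < m" for i
    using ws that unfolding ws'_def by auto
  have ip: "ws' ! i \<bullet> ws' ! j = (if i = j then 1 else 0)" if ij: "i < m" "j < m" for i j
  proof -
    have ci: "ws ! i \<in> carrier_vec m" and cj: "ws ! j \<in> carrier_vec m" using ws ij by auto
    have "ws' ! i \<bullet> ws' ! j = (1 / sqrt (ws!i \<bullet> ws!i)) * (1 / sqrt (ws!j \<bullet> ws!j)) * (ws ! i \<bullet> ws ! j)"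
      unfolding ws'_def using ij ws ci cj by simp
    thus ?thesis using orth[OF ij] sq_pos[OF ij(1)]
      by (cases "i = j", auto simp: real_sqrt_mult[symmetric])
  qed
  define W where "W = mat_of_cols m ws'"
  have W: "W \<in> carrier_mat m m"
    unfolding W_def using ws mat_of_cols_carrier(1)[of m ws'] by (simp add: ws'_def)
  have colW: "col W i = ws' ! i" if "i < m" for i
    unfolding W_def using ws'_car[OF that] that ws by (simp add: ws'_def)
  have "transpose_mat W * W = 1\<^sub>m m"
    by (rule eq_matI, insert W, auto simp: colW ip)
  moreover have "col W 0 = u" using colW[OF m0] ws0 m0 ws(3) u1 by (simp add: ws'_def)
  ultimately show ?thesis using W by blast
qed

lemma orthogonal_deflation:
  fixes M W :: "real mat"
  assumes M: "M \<in> carrier_mat (Suc n) (Suc n)" and sym: "transpose_mat M = M"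
    and W: "W \<in> carrier_mat (Suc n) (Suc n)" and WtW: "transpose_mat W * W = 1\<^sub>m (Suc n)"
    and u: "col W 0 = u" and Mu: "M *\<^sub>v u = e \<cdot>\<^sub>v u"
  shows "\<exists>M'. M' \<in> carrier_mat n n \<and> transpose_mat M' = M' \<and>
           transpose_mat W * M * W = four_block_mat (mat 1 1 (\<lambda>_. e)) (0\<^sub>m 1 n) (0\<^sub>m n 1) M'"
proof -
  define B where "B = transpose_mat W * M * W"
  have B: "B \<in> carrier_mat (Suc n) (Suc n)" unfolding B_def using W M by auto
  have B0: "B $$ (i,0) = (if i = 0 then e else 0)" if i: "i < Suc n" for i
  proof -
    have "B = transpose_mat W * (M * W)" unfolding B_def using W M by simp
    hence "B $$ (i,0) = col W i \<bullet> (M *\<^sub>v col W 0)" using i W M by (simp add: mult_mat_vec_def)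
    also have "\<dots> = e * (col W i \<bullet> col W 0)" unfolding u Mu using u W i by auto
    also have "col W i \<bullet> col W 0 = (transpose_mat W * W) $$ (i,0)" using i W by simp
    also have "\<dots> = (if i = 0 then 1 else 0)" unfolding WtW using i by simp
    finally show ?thesis by simp
  qed
  have Bsym: "transpose_mat B = B"
  proof -
    have "transpose_mat B = transpose_mat W * transpose_mat (transpose_mat W * M)"
      unfolding B_def by (rule transpose_mult[of _ "Suc n" "Suc n"], insert W M, auto)
    also have "transpose_mat (transpose_mat W * M) = transpose_mat M * W"
      by (subst transpose_mult[of _ "Suc n" "Suc n"], insert W M, auto)
    finally show ?thesis unfolding B_def sym using W M by simp
  qed
  have Bs: "B $$ (i,j) = B $$ (j,i)" if "i < Suc n" "j < Suc n" for i j
    using arg_cong[OF Bsym, of "\<lambda>A. A $$ (j,i)"] B that by auto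
  define M' where "M' = mat n n (\<lambda>(i,j). B $$ (Suc i, Suc j))"
  have "B = four_block_mat (mat 1 1 (\<lambda>_. e)) (0\<^sub>m 1 n) (0\<^sub>m n 1) M'"
  proof (rule eq_matI)
    fix i j assume "i < dim_row (four_block_mat (mat 1 1 (\<lambda>_. e)) (0\<^sub>m 1 n) (0\<^sub>m n 1) M')"
       "j < dim_col (four_block_mat (mat 1 1 (\<lambda>_. e)) (0\<^sub>m 1 n) (0\<^sub>m n 1) M')"
    hence i: "i < Suc n" and j: "j < Suc n" by (auto simp: M'_def)
    show "B $$ (i,j) = four_block_mat (mat 1 1 (\<lambda>_. e)) (0\<^sub>m 1 n) (0\<^sub>m n 1) M' $$ (i,j)"
      using B0[OF i] B0[OF j] Bs[OF i j] i j by (cases "i = 0"; cases "j = 0"; auto simp: M'_def)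
  qed (insert B, auto simp: M'_def)
  moreover have "transpose_mat M' = M'" unfolding M'_def by (rule eq_matI, auto simp: Bs)
  moreover have "M' \<in> carrier_mat n n" unfolding M'_def by simp
  ultimately show ?thesis unfolding B_def by blast
qed

locale orth_diag =
  fixes k :: nat and M P :: "real mat" and d :: "nat \<Rightarrow> real"
  assumes M_carrier: "M \<in> carrier_mat k k" and P_carrier: "P \<in> carrier_mat k k"
    and orthogonal: "transpose_mat P * P = 1\<^sub>m k"
    and diagonalises: "transpose_mat P * M * P = mat_diag k d"

lemma orth_diag_extend:
  assumes "orth_diag n M' P' d'"
  defines "D \<equiv> four_block_mat (1\<^sub>m 1) (0\<^sub>m 1 n) (0\<^sub>m n 1) P'"
  shows "orth_diag (Suc n) (four_block_mat (mat 1 1 (\<lambda>_. e)) (0\<^sub>m 1 n) (0\<^sub>m n 1) M') D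
           (\<lambda>i. if i = 0 then e else d' (i - 1))"
proof -
  interpret orth_diag n M' P' d' by fact
  have Dt: "transpose_mat D = four_block_mat (1\<^sub>m 1) (0\<^sub>m 1 n) (0\<^sub>m n 1) (transpose_mat P')"
    unfolding D_def by (subst transpose_four_block_mat, insert P_carrier, auto)
  show ?thesis
  proof
    show "transpose_mat D * D = 1\<^sub>m (Suc n)"
      unfolding Dt unfolding D_def
      by (subst mult_four_block_mat, insert P_carrier orthogonal, auto intro!: eq_matI)
    show "transpose_mat D * four_block_mat (mat 1 1 (\<lambda>_. e)) (0\<^sub>m 1 n) (0\<^sub>m n 1) M' * D =
        mat_diag (Suc n) (\<lambda>i. if i = 0 then e else d' (i - 1))"
      unfolding Dt unfolding D_def
      by (subst mult_four_block_mat, insert P_carrier M_carrier, auto,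
          subst mult_four_block_mat, insert P_carrier M_carrier, auto simp: diagonalises,
          auto intro!: eq_matI simp: mat_diag_def)
  qed (insert M_carrier P_carrier, auto simp: D_def)
qed

theorem spectral_theorem:
  fixes M :: "real mat"
  assumes "M \<in> carrier_mat n n" "transpose_mat M = M"
  shows "\<exists>P d. orth_diag n M P d"
  using assms
proof (induction n arbitrary: M)
  case 0
  show ?case by (rule exI[of _ "1\<^sub>m 0"], rule exI[of _ "\<lambda>_. 0"], unfold_locales,
      insert 0, auto intro!: eq_matI simp: mat_diag_def)
next
  case (Suc n M)
  have M: "M \<in> carrier_mat (Suc n) (Suc n)" and sym: "transpose_mat M = M" using Suc by auto
  obtain e v where v: "v \<in> carrier_vec (Suc n)" and v0: "v \<noteq> 0\<^sub>v (Suc n)"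
    and Mv: "M *\<^sub>v v = e \<cdot>\<^sub>v v" using real_symmetric_eigenvector[OF M sym] by auto
  have vv: "v \<bullet> v > 0" using conjugate_square_greater_0_vec[OF v] v0 by simp
  define u where "u = (1 / sqrt (v \<bullet> v)) \<cdot>\<^sub>v v"
  have u: "u \<in> carrier_vec (Suc n)" using v unfolding u_def by auto
  have u1: "u \<bullet> u = 1" unfolding u_def using v vv by (simp add: real_sqrt_mult[symmetric])
  have Mu: "M *\<^sub>v u = e \<cdot>\<^sub>v u" unfolding u_def
    using mult_mat_vec[OF M v] Mv v by (auto simp: smult_smult_assoc mult.commute)
  obtain W where W: "W \<in> carrier_mat (Suc n) (Suc n)" and WtW: "transpose_mat W * W = 1\<^sub>m (Suc n)"
    and W0: "col W 0 = u" using orthonormal_completion[OF u u1] by auto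
  obtain M' where M': "M' \<in> carrier_mat n n" "transpose_mat M' = M'"
    and WMW: "transpose_mat W * M * W = four_block_mat (mat 1 1 (\<lambda>_. e)) (0\<^sub>m 1 n) (0\<^sub>m n 1) M'"
    using orthogonal_deflation[OF M sym W WtW W0 Mu] by auto
  obtain P' d' where "orth_diag n M' P' d'" using Suc.IH[OF M'] by auto
  from orth_diag_extend[OF this, of e, folded WMW]
  obtain D d where D: "orth_diag (Suc n) (transpose_mat W * M * W) D d" by blast
  interpret D: orth_diag "Suc n" "transpose_mat W * M * W" D d by (rule D)
  have tWD: "transpose_mat (W * D) = transpose_mat D * transpose_mat W"
    by (rule transpose_mult[OF W D.P_carrier])
  have "orth_diag (Suc n) M (W * D) d"
  proof
    have "transpose_mat (W * D) * (W * D) = transpose_mat D * (transpose_mat W * W) * D"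
      unfolding tWD using W D.P_carrier
      by (simp add: assoc_mult_mat[of _ "Suc n" "Suc n" _ "Suc n" _ "Suc n"])
    thus "transpose_mat (W * D) * (W * D) = 1\<^sub>m (Suc n)"
      unfolding WtW using D.P_carrier D.orthogonal by simp
    have "transpose_mat (W * D) * M * (W * D) = transpose_mat D * (transpose_mat W * M * W) * D"
      unfolding tWD using W D.P_carrier M
      by (simp add: assoc_mult_mat[of _ "Suc n" "Suc n" _ "Suc n" _ "Suc n"])
    thus "transpose_mat (W * D) * M * (W * D) = mat_diag (Suc n) d"
      using D.diagonalises by simp
  qed (insert M W D.P_carrier, auto)
  thus ?case by blast
qed

context orth_diag
begin

lemma Pt_carrier: "transpose_mat P \<in> carrier_mat k k"
  using P_carrier by simp

lemma orthogonal_right: "P * transpose_mat P = 1\<^sub>m k"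
  using mat_mult_left_right_inverse[OF Pt_carrier P_carrier orthogonal] .

lemma P_Pt_vec: "x \<in> carrier_vec k \<Longrightarrow> P *\<^sub>v (transpose_mat P *\<^sub>v x) = x"
  using orthogonal_right P_carrier by (simp add: assoc_mult_mat_vec[symmetric, of _ k k _ k])

lemma Pt_P_vec: "x \<in> carrier_vec k \<Longrightarrow> transpose_mat P *\<^sub>v (P *\<^sub>v x) = x"
  using orthogonal P_carrier by (simp add: assoc_mult_mat_vec[symmetric, of _ k k _ k])

lemma quad_form: "x \<in> carrier_vec k \<Longrightarrow>
  x \<bullet> (M *\<^sub>v x) = (\<Sum>i<k. d i * ((transpose_mat P *\<^sub>v x) $ i)^2)"
proof -
  assume x: "x \<in> carrier_vec k"
  define y where "y = transpose_mat P *\<^sub>v x"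
  have y: "y \<in> carrier_vec k" unfolding y_def using P_carrier x by auto
  have xy: "x = P *\<^sub>v y" unfolding y_def using P_Pt_vec[OF x] ..
  have My: "M *\<^sub>v (P *\<^sub>v y) \<in> carrier_vec k" using M_carrier P_carrier y by auto
  have "x \<bullet> (M *\<^sub>v x) = (M *\<^sub>v (P *\<^sub>v y)) \<bullet> (P *\<^sub>v y)"
    unfolding xy by (rule comm_scalar_prod[of _ k], insert P_carrier y M_carrier, auto)
  also have "\<dots> = (transpose_mat P *\<^sub>v (M *\<^sub>v (P *\<^sub>v y))) \<bullet> y"
    by (rule transpose_vec_mult_scalar[symmetric, OF P_carrier y My])
  also have "transpose_mat P *\<^sub>v (M *\<^sub>v (P *\<^sub>v y)) = vec k (\<lambda>i. d i * y $ i)"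
    using mult3_mat_vec[OF Pt_carrier M_carrier P_carrier y] diagonalises
      mat_diag_mult_vec[OF y] by simp
  also have "vec k (\<lambda>i. d i * y $ i) \<bullet> y = (\<Sum>i<k. d i * (y $ i)^2)"
    using y by (simp add: scalar_prod_def lessThan_atLeast0 power2_eq_square mult.assoc)
  finally show ?thesis unfolding y_def .
qed

lemma norm_form: "x \<in> carrier_vec k \<Longrightarrow> x \<bullet> x = (\<Sum>i<k. ((transpose_mat P *\<^sub>v x) $ i)^2)"
proof -
  assume x: "x \<in> carrier_vec k"
  interpret identity: orth_diag k "1\<^sub>m k" P "\<lambda>_. 1"
    by unfold_locales (use P_carrier orthogonal in auto)
  show ?thesis using identity.quad_form[OF x] x by simp
qed

lemma diag_entry:
  assumes i: "i < k"
  shows "(P *\<^sub>v unit_vec k i) \<bullet> (M *\<^sub>v (P *\<^sub>v unit_vec k i)) = d i"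
    "(P *\<^sub>v unit_vec k i) \<bullet> (P *\<^sub>v unit_vec k i) = 1"
proof -
  have x: "P *\<^sub>v unit_vec k i \<in> carrier_vec k" using P_carrier by auto
  have sq: "(\<Sum>j<k. f j * ((unit_vec k i :: real vec) $ j)^2) = f i" for f :: "nat \<Rightarrow> real"
    using i by (subst sum.remove[of _ i], auto)
  show "(P *\<^sub>v unit_vec k i) \<bullet> (M *\<^sub>v (P *\<^sub>v unit_vec k i)) = d i"
    unfolding quad_form[OF x] Pt_P_vec[OF unit_vec_carrier] by (rule sq)
  show "(P *\<^sub>v unit_vec k i) \<bullet> (P *\<^sub>v unit_vec k i) = 1"
    unfolding norm_form[OF x] Pt_P_vec[OF unit_vec_carrier] using sq[of "\<lambda>_. 1"] by simp
qed

lemma eigenvalues: "{e. eigenvalue M e} = d ` {..<k}"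
proof (intro equalityI subsetI)
  fix e assume "e \<in> {e. eigenvalue M e}"
  then obtain v where v: "v \<in> carrier_vec k" and v0: "v \<noteq> 0\<^sub>v k" and Mv: "M *\<^sub>v v = e \<cdot>\<^sub>v v"
    using M_carrier unfolding eigenvalue_def eigenvector_def by auto
  define y where "y = transpose_mat P *\<^sub>v v"
  have y: "y \<in> carrier_vec k" unfolding y_def using P_carrier v by auto
  have "y \<noteq> 0\<^sub>v k" using P_Pt_vec[OF v, folded y_def] v0 P_carrier by auto
  then obtain i where i: "i < k" and yi: "y $ i \<noteq> 0" using y by (metis eq_vecI carrier_vecD index_zero_vec)
  have "mat_diag k d *\<^sub>v y = transpose_mat P *\<^sub>v (M *\<^sub>v v)"
    using mult3_mat_vec[OF Pt_carrier M_carrier P_carrier y] diagonalises P_Pt_vec[OF v]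
    unfolding y_def by simp
  also have "\<dots> = e \<cdot>\<^sub>v y" unfolding Mv y_def using Pt_carrier v by (simp add: mult_mat_vec)
  finally have "(mat_diag k d *\<^sub>v y) $ i = (e \<cdot>\<^sub>v y) $ i" by simp
  hence "d i * y $ i = e * y $ i" using i y by (simp add: mat_diag_mult_vec[OF y])
  thus "e \<in> d ` {..<k}" using yi i by auto
next
  fix e assume "e \<in> d ` {..<k}"
  then obtain i where i: "i < k" and e: "e = d i" by auto
  define w where "w = P *\<^sub>v unit_vec k i"
  have w: "w \<in> carrier_vec k" unfolding w_def using P_carrier by auto
  have Ptw: "transpose_mat P *\<^sub>v w = unit_vec k i" unfolding w_def by (rule Pt_P_vec, simp)
  have w0: "w \<noteq> 0\<^sub>v k" using diag_entry(2)[OF i, folded w_def] by auto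
  have "M = P * mat_diag k d * transpose_mat P"
  proof -
    have "P * (transpose_mat P * M * P) * transpose_mat P
        = (P * transpose_mat P) * M * (P * transpose_mat P)"
      using P_carrier Pt_carrier M_carrier by (simp add: assoc_mult_mat[of _ k k _ k _ k])
    thus ?thesis unfolding diagonalises orthogonal_right using M_carrier by simp
  qed
  hence "M *\<^sub>v w = P *\<^sub>v (mat_diag k d *\<^sub>v unit_vec k i)"
    using mult3_mat_vec[OF P_carrier mat_diag_dim Pt_carrier w] Ptw by simp
  also have "mat_diag k d *\<^sub>v unit_vec k i = d i \<cdot>\<^sub>v unit_vec k i"
    by (subst mat_diag_mult_vec, auto intro!: eq_vecI simp: i)
  also have "P *\<^sub>v (d i \<cdot>\<^sub>v unit_vec k i) = d i \<cdot>\<^sub>v w" unfolding w_def using P_carrier by (simp add: mult_mat_vec)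
  finally show "e \<in> {e. eigenvalue M e}"
    unfolding eigenvalue_def eigenvector_def e using w w0 M_carrier by auto
qed

lemma det_eq: "det M = (\<Prod>i<k. d i)"
proof -
  have "det (transpose_mat P) * det P = 1"
    using det_mult[OF Pt_carrier P_carrier] orthogonal by simp
  hence "det M = det (transpose_mat P) * det M * det P" by (simp add: algebra_simps)
  also have "\<dots> = det (transpose_mat P * M * P)"
    using det_mult[OF Pt_carrier M_carrier] det_mult[of "transpose_mat P * M" k P] P_carrier M_carrier
    by simp
  also have "\<dots> = prod_list (diag_mat (mat_diag k d))" unfolding diagonalises
    by (rule det_upper_triangular, auto simp: upper_triangular_def mat_diag_def)
  also have "\<dots> = (\<Prod>i<k. d i)"
    by (simp add: diag_mat_def mat_diag_def prod.list_conv_set_nth lessThan_atLeast0)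
  finally show ?thesis .
qed

end

lemma rayleigh_bounds:
  fixes M :: "real mat"
  assumes M: "M \<in> carrier_mat k k" and sym: "transpose_mat M = M" and k: "k > 0"
    and x: "x \<in> carrier_vec k"
  shows "lambda_min M * (x \<bullet> x) \<le> x \<bullet> (M *\<^sub>v x)" "x \<bullet> (M *\<^sub>v x) \<le> lambda_max M * (x \<bullet> x)"
proof -
  obtain P d where "orth_diag k M P d" using spectral_theorem[OF M sym] by auto
  then interpret orth_diag k M P d .
  have bounds: "lambda_min M \<le> d i" "d i \<le> lambda_max M" if "i < k" for i
    unfolding lambda_min_def lambda_max_def eigenvalues using that by auto
  show "lambda_min M * (x \<bullet> x) \<le> x \<bullet> (M *\<^sub>v x)" unfolding quad_form[OF x] norm_form[OF x] sum_distrib_left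
    by (rule sum_mono, rule mult_right_mono, auto simp: bounds)
  show "x \<bullet> (M *\<^sub>v x) \<le> lambda_max M * (x \<bullet> x)" unfolding quad_form[OF x] norm_form[OF x] sum_distrib_left
    by (rule sum_mono, rule mult_right_mono, auto simp: bounds)
qed

(* If l |x|^2 <= x^T M x with l >= 0, all eigenvalues are >= l, so det M >= l^k. *)
lemma det_lower_bound:
  fixes M :: "real mat"
  assumes M: "M \<in> carrier_mat k k" and sym: "transpose_mat M = M" and l: "l \<ge> 0"
    and lb: "\<And>x. x \<in> carrier_vec k \<Longrightarrow> l * (x \<bullet> x) \<le> x \<bullet> (M *\<^sub>v x)"
  shows "l ^ k \<le> det M"
proof -
  obtain P d where "orth_diag k M P d" using spectral_theorem[OF M sym] by auto
  then interpret orth_diag k M P d .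
  have "l \<le> d i" if "i < k" for i
    using lb[of "P *\<^sub>v unit_vec k i"] diag_entry[OF that] P_carrier by auto
  hence "(\<Prod>i<k. l) \<le> (\<Prod>i<k. d i)" by (intro prod_mono, auto simp: l)
  thus ?thesis unfolding det_eq by simp
qed

(* If 0 <= x^T M x <= u |x|^2, all eigenvalues lie in [0, u], so det M <= u^k. *)
lemma det_upper_bound:
  fixes M :: "real mat"
  assumes M: "M \<in> carrier_mat k k" and sym: "transpose_mat M = M"
    and lb: "\<And>x. x \<in> carrier_vec k \<Longrightarrow> 0 \<le> x \<bullet> (M *\<^sub>v x)"
    and ub: "\<And>x. x \<in> carrier_vec k \<Longrightarrow> x \<bullet> (M *\<^sub>v x) \<le> u * (x \<bullet> x)"
  shows "det M \<le> u ^ k"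
proof -
  obtain P d where "orth_diag k M P d" using spectral_theorem[OF M sym] by auto
  then interpret orth_diag k M P d .
  have "0 \<le> d i \<and> d i \<le> u" if "i < k" for i
    using lb[of "P *\<^sub>v unit_vec k i"] ub[of "P *\<^sub>v unit_vec k i"] diag_entry[OF that] P_carrier
    by auto
  hence "(\<Prod>i<k. d i) \<le> (\<Prod>i<k. u)" by (intro prod_mono, auto)
  thus ?thesis unfolding det_eq by simp
qed

(* Sylvester's determinant identity det (I_n + A B) = det (I_k + B A), via the block
   matrices [[I, -A], [B, I]] and [[I, A], [0, I]]. *)
lemma sylvester_det:
  fixes A B :: "real mat"
  assumes A: "A \<in> carrier_mat n k" and B: "B \<in> carrier_mat k n"
  shows "det (1\<^sub>m n + A * B) = det (1\<^sub>m k + B * A)"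
proof -
  define M where "M = four_block_mat (1\<^sub>m n) (- A) B (1\<^sub>m k)"
  define L where "L = four_block_mat (1\<^sub>m n) A (0\<^sub>m k n) (1\<^sub>m k)"
  have M: "M \<in> carrier_mat (n+k) (n+k)" unfolding M_def using A B by auto
  have L: "L \<in> carrier_mat (n+k) (n+k)" unfolding L_def using A B by auto
  have "M * L = four_block_mat (1\<^sub>m n) (0\<^sub>m n k) B (1\<^sub>m k + B * A)"
    unfolding M_def L_def by (subst mult_four_block_mat, insert A B, auto simp: add.commute)
  hence detML: "det (M * L) = det (1\<^sub>m k + B * A)"
    by (simp, subst det_four_block_mat_upper_right_zero[of _ n _ k], insert A B, auto)
  have "L * M = four_block_mat (1\<^sub>m n + A * B) (0\<^sub>m n k) B (1\<^sub>m k)"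
    unfolding M_def L_def by (subst mult_four_block_mat, insert A B, auto)
  hence detLM: "det (L * M) = det (1\<^sub>m n + A * B)"
    by (simp, subst det_four_block_mat_upper_right_zero[of _ n _ k], insert A B, auto)
  show ?thesis using det_mult[OF M L] det_mult[OF L M] detML detLM by simp
qed

lemma minv_unique:
  fixes A B :: "real mat"
  assumes A: "A \<in> carrier_mat m m" and B: "B \<in> carrier_mat m m"
    and AB: "A * B = 1\<^sub>m m" and BA: "B * A = 1\<^sub>m m"
  shows "minv A = B"
proof -
  have "\<exists>C. C \<in> carrier_mat m m \<and> A * C = 1\<^sub>m m \<and> C * A = 1\<^sub>m m" using B AB BA by blast
  from someI_ex[OF this] have C: "minv A \<in> carrier_mat m m" "minv A * A = 1\<^sub>m m"
    unfolding minv_def using A by auto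
  have "minv A = minv A * (A * B)" using C AB by simp
  also have "\<dots> = (minv A * A) * B" by (rule assoc_mult_mat[symmetric], insert A B C, auto)
  finally show ?thesis using C B by simp
qed

lemma nonzero_det_inverse:
  fixes A :: "real mat"
  assumes A: "A \<in> carrier_mat m m" and d: "det A \<noteq> 0"
  shows "\<exists>B. B \<in> carrier_mat m m \<and> A * B = 1\<^sub>m m \<and> B * A = 1\<^sub>m m"
  using det_non_zero_imp_unit[OF A d, of undefined]
  unfolding Units_def ring_mat_def by auto

lemma inverse_symmetric:
  fixes A B :: "real mat"
  assumes A: "A \<in> carrier_mat m m" and B: "B \<in> carrier_mat m m" and sym: "transpose_mat A = A"
    and AB: "A * B = 1\<^sub>m m" and BA: "B * A = 1\<^sub>m m"
  shows "transpose_mat B = B"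
proof -
  have "transpose_mat (A * B) = 1\<^sub>m m" using AB by simp
  hence BtA: "transpose_mat B * A = 1\<^sub>m m" using transpose_mult[OF A B] sym by simp
  have "transpose_mat B = transpose_mat B * (A * B)" using AB B by simp
  also have "\<dots> = (transpose_mat B * A) * B" by (rule assoc_mult_mat[symmetric], insert A B, auto)
  finally show ?thesis using BtA B by simp
qed

lemma transpose_smult_mat: "transpose_mat (a \<cdot>\<^sub>m A) = a \<cdot>\<^sub>m transpose_mat A"
  by (rule eq_matI, auto)

lemma smult_mat_mult_vec:
  assumes A: "A \<in> carrier_mat k k" and s: "s \<in> carrier_vec k"
  shows "(a \<cdot>\<^sub>m A) *\<^sub>v s = a \<cdot>\<^sub>v (A *\<^sub>v s)"
  by (rule eq_vecI, insert A s, auto simp: scalar_prod_def sum_distrib_left mult.assoc)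

lemma congruence_symmetric:
  fixes B Q :: "real mat"
  assumes B: "B \<in> carrier_mat m k" and Q: "Q \<in> carrier_mat m m" and Qs: "transpose_mat Q = Q"
  shows "transpose_mat (transpose_mat B * Q * B) = transpose_mat B * Q * B"
proof -
  have "transpose_mat (transpose_mat B * Q * B) = transpose_mat B * transpose_mat (transpose_mat B * Q)"
    by (rule transpose_mult, insert B Q, auto)
  also have "transpose_mat (transpose_mat B * Q) = transpose_mat Q * B"
    by (subst transpose_mult, insert B Q, auto)
  also have "transpose_mat B * (transpose_mat Q * B) = transpose_mat B * Q * B"
    unfolding Qs by (rule assoc_mult_mat[symmetric], insert B Q, auto)
  finally show ?thesis .
qed

lemma congruence_quad_form:
  fixes B Q :: "real mat"
  assumes B: "B \<in> carrier_mat m k" and Q: "Q \<in> carrier_mat m m" and v: "v \<in> carrier_vec k"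
  shows "v \<bullet> ((transpose_mat B * Q * B) *\<^sub>v v) = (B *\<^sub>v v) \<bullet> (Q *\<^sub>v (B *\<^sub>v v))"
proof -
  have u: "Q *\<^sub>v (B *\<^sub>v v) \<in> carrier_vec m" using B Q v by auto
  have "(transpose_mat B * Q * B) *\<^sub>v v = transpose_mat B *\<^sub>v (Q *\<^sub>v (B *\<^sub>v v))"
    using B Q v by (simp add: assoc_mult_mat_vec[of _ k m _ k] assoc_mult_mat_vec[of _ m m _ k])
  hence "v \<bullet> ((transpose_mat B * Q * B) *\<^sub>v v) = (transpose_mat B *\<^sub>v (Q *\<^sub>v (B *\<^sub>v v))) \<bullet> v"
    using comm_scalar_prod[of v k] B u v by auto
  also have "\<dots> = (Q *\<^sub>v (B *\<^sub>v v)) \<bullet> (B *\<^sub>v v)"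
    by (rule transpose_vec_mult_scalar[OF B v u])
  also have "\<dots> = (B *\<^sub>v v) \<bullet> (Q *\<^sub>v (B *\<^sub>v v))"
    by (rule comm_scalar_prod[of _ m], insert B u v, auto)
  finally show ?thesis .
qed

(* Rayleigh bounds for a congruence B^T Q B normalised by 1/N, as they appear in the
   eigenvalue conditions of the theorem. *)
lemma scaled_congruence_rayleigh:
  fixes B Q :: "real mat"
  assumes B: "B \<in> carrier_mat m k" and Q: "Q \<in> carrier_mat m m" and Qs: "transpose_mat Q = Q"
    and k: "k > 0" and N: "N > 0" and s: "s \<in> carrier_vec k"
  defines "H \<equiv> (1 / real N) \<cdot>\<^sub>m (transpose_mat B * Q * B)"
  shows "real N * lambda_min H * (s \<bullet> s) \<le> (B *\<^sub>v s) \<bullet> (Q *\<^sub>v (B *\<^sub>v s))"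
    "(B *\<^sub>v s) \<bullet> (Q *\<^sub>v (B *\<^sub>v s)) \<le> real N * lambda_max H * (s \<bullet> s)"
proof -
  have M: "transpose_mat B * Q * B \<in> carrier_mat k k" using B Q by auto
  have H: "H \<in> carrier_mat k k" unfolding H_def using M by simp
  have Hs: "transpose_mat H = H"
    unfolding H_def transpose_smult_mat congruence_symmetric[OF B Q Qs] ..
  have "s \<bullet> (H *\<^sub>v s) = (1 / real N) * ((B *\<^sub>v s) \<bullet> (Q *\<^sub>v (B *\<^sub>v s)))"
    unfolding H_def smult_mat_mult_vec[OF M s] congruence_quad_form[OF B Q s, symmetric]
    using M s by simp
  hence form: "(B *\<^sub>v s) \<bullet> (Q *\<^sub>v (B *\<^sub>v s)) = real N * (s \<bullet> (H *\<^sub>v s))" using N by simp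
  show "real N * lambda_min H * (s \<bullet> s) \<le> (B *\<^sub>v s) \<bullet> (Q *\<^sub>v (B *\<^sub>v s))"
    unfolding form mult.assoc using rayleigh_bounds(1)[OF H Hs k s] N by (intro mult_left_mono) auto
  show "(B *\<^sub>v s) \<bullet> (Q *\<^sub>v (B *\<^sub>v s)) \<le> real N * lambda_max H * (s \<bullet> s)"
    unfolding form mult.assoc using rayleigh_bounds(2)[OF H Hs k s] N by (intro mult_left_mono) auto
qed

definition orth_proj :: "nat \<Rightarrow> real mat \<Rightarrow> bool" where
  "orth_proj n Q \<longleftrightarrow> Q \<in> carrier_mat n n \<and> transpose_mat Q = Q \<and> Q * Q = Q"

lemma orth_proj_quad_form:
  assumes Q: "orth_proj n Q" and x: "x \<in> carrier_vec n"
  shows "x \<bullet> (Q *\<^sub>v x) = (Q *\<^sub>v x) \<bullet> (Q *\<^sub>v x)" "0 \<le> x \<bullet> (Q *\<^sub>v x)"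
proof -
  have Qc: "Q \<in> carrier_mat n n" and sym: "transpose_mat Q = Q" and idem: "Q * Q = Q"
    using Q unfolding orth_proj_def by auto
  have "x \<bullet> (Q *\<^sub>v x) = x \<bullet> (Q *\<^sub>v (Q *\<^sub>v x))" using assoc_mult_mat_vec[OF Qc Qc x] idem by simp
  also have "\<dots> = (Q *\<^sub>v x) \<bullet> (Q *\<^sub>v x)" using transpose_vec_mult_scalar[OF Qc _ x] sym Qc x by auto
  finally show "x \<bullet> (Q *\<^sub>v x) = (Q *\<^sub>v x) \<bullet> (Q *\<^sub>v x)" .
  thus "0 \<le> x \<bullet> (Q *\<^sub>v x)" using conjugate_square_ge_0_vec[of "Q *\<^sub>v x"] by simp
qed

lemma orth_proj_complement:
  assumes "orth_proj n P" shows "orth_proj n (1\<^sub>m n - P)"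
proof -
  have P: "P \<in> carrier_mat n n" and Ps: "transpose_mat P = P" and Pid: "P * P = P"
    using assms unfolding orth_proj_def by auto
  have "P * (1\<^sub>m n - P) = P * 1\<^sub>m n - P * P" by (rule mult_minus_distrib_mat, insert P, auto)
  hence PR: "P * (1\<^sub>m n - P) = 0\<^sub>m n n" using P Pid by simp
  have "(1\<^sub>m n - P) * (1\<^sub>m n - P) = 1\<^sub>m n * (1\<^sub>m n - P) - P * (1\<^sub>m n - P)"
    by (rule minus_mult_distrib_mat, insert P, auto)
  also have "\<dots> = 1\<^sub>m n - P" unfolding PR using P by (intro eq_matI, auto)
  finally show ?thesis unfolding orth_proj_def
    using transpose_minus[of "1\<^sub>m n" n n P] P Ps by auto
qed

(* For a positive semidefinite K, I + K >= I, hence det (I + K) >= 1 and I + K is invertible. *)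
lemma det_one_plus_psd:
  fixes K :: "real mat"
  assumes K: "K \<in> carrier_mat n n" and sym: "transpose_mat K = K"
    and psd: "\<And>x. x \<in> carrier_vec n \<Longrightarrow> 0 \<le> x \<bullet> (K *\<^sub>v x)"
  shows "1 \<le> det (1\<^sub>m n + K)"
proof -
  have "x \<bullet> ((1\<^sub>m n + K) *\<^sub>v x) = x \<bullet> x + x \<bullet> (K *\<^sub>v x)" if x: "x \<in> carrier_vec n" for x
    using K x by (simp add: add_mult_distrib_mat_vec[of _ n n] scalar_prod_add_distrib[of _ n])
  hence "1 ^ n \<le> det (1\<^sub>m n + K)"
    using psd K sym transpose_add[of "1\<^sub>m n" n n K] by (intro det_lower_bound) auto
  thus ?thesis by simp
qed

locale psd_resolvent =
  fixes n :: nat and K G :: "real mat"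
  assumes K_carrier: "K \<in> carrier_mat n n" and K_sym: "transpose_mat K = K"
    and K_psd: "\<And>x. x \<in> carrier_vec n \<Longrightarrow> 0 \<le> x \<bullet> (K *\<^sub>v x)"
    and G_carrier: "G \<in> carrier_mat n n"
    and right_inverse: "(1\<^sub>m n + K) * G = 1\<^sub>m n" and left_inverse: "G * (1\<^sub>m n + K) = 1\<^sub>m n"

lemma psd_resolvent_exists:
  assumes "K \<in> carrier_mat n n" "transpose_mat K = K" "\<And>x. x \<in> carrier_vec n \<Longrightarrow> 0 \<le> x \<bullet> (K *\<^sub>v x)"
  shows "\<exists>G. psd_resolvent n K G"
  using nonzero_det_inverse[of "1\<^sub>m n + K" n] det_one_plus_psd[OF assms] assms
  unfolding psd_resolvent_def by auto

context psd_resolvent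
begin

lemma G_sym: "transpose_mat G = G"
  using inverse_symmetric[of "1\<^sub>m n + K" n G] K_carrier G_carrier right_inverse left_inverse
    transpose_add[of "1\<^sub>m n" n n K] K_sym by simp

lemma resolvent_forms:
  assumes y: "y \<in> carrier_vec n"
  defines "w \<equiv> G *\<^sub>v y"
  shows "y = w + K *\<^sub>v w" "y \<bullet> (G *\<^sub>v y) = w \<bullet> w + w \<bullet> (K *\<^sub>v w)"
    "y \<bullet> y = w \<bullet> w + 2 * (w \<bullet> (K *\<^sub>v w)) + (K *\<^sub>v w) \<bullet> (K *\<^sub>v w)"
proof -
  have w: "w \<in> carrier_vec n" unfolding w_def using G_carrier y by auto
  have Kw: "K *\<^sub>v w \<in> carrier_vec n" using K_carrier w by auto
  have "y = ((1\<^sub>m n + K) * G) *\<^sub>v y" using right_inverse y by simp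
  also have "\<dots> = (1\<^sub>m n + K) *\<^sub>v w" unfolding w_def
    by (rule assoc_mult_mat_vec, insert K_carrier G_carrier y, auto)
  also have "\<dots> = w + K *\<^sub>v w" using K_carrier w by (simp add: add_mult_distrib_mat_vec[of _ n n])
  finally show yw: "y = w + K *\<^sub>v w" .
  have c: "(K *\<^sub>v w) \<bullet> w = w \<bullet> (K *\<^sub>v w)" by (rule comm_scalar_prod[of _ n], insert Kw w, auto)
  show "y \<bullet> (G *\<^sub>v y) = w \<bullet> w + w \<bullet> (K *\<^sub>v w)"
    unfolding w_def[symmetric] apply (subst (1) yw)
    using add_scalar_prod_distrib[OF w Kw w] c by simp
  show "y \<bullet> y = w \<bullet> w + 2 * (w \<bullet> (K *\<^sub>v w)) + (K *\<^sub>v w) \<bullet> (K *\<^sub>v w)"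
    apply (subst (1 2) yw)
    using add_scalar_prod_distrib[OF w Kw add_carrier_vec[OF w Kw]]
      scalar_prod_add_distrib[OF w w Kw] scalar_prod_add_distrib[OF Kw w Kw] c by simp
qed

lemma resolvent_bounds:
  assumes y: "y \<in> carrier_vec n"
  shows "(G *\<^sub>v y) \<bullet> (G *\<^sub>v y) \<le> y \<bullet> (G *\<^sub>v y)" "0 \<le> y \<bullet> (G *\<^sub>v y)" "y \<bullet> (G *\<^sub>v y) \<le> y \<bullet> y"
proof -
  have w: "G *\<^sub>v y \<in> carrier_vec n" using G_carrier y by auto
  show "(G *\<^sub>v y) \<bullet> (G *\<^sub>v y) \<le> y \<bullet> (G *\<^sub>v y)" using resolvent_forms[OF y] K_psd[OF w] by linarith
  thus "0 \<le> y \<bullet> (G *\<^sub>v y)" using conjugate_square_ge_0_vec[of "G *\<^sub>v y"] by simp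
  have "0 \<le> (K *\<^sub>v (G *\<^sub>v y)) \<bullet> (K *\<^sub>v (G *\<^sub>v y))"
    using conjugate_square_ge_0_vec[of "K *\<^sub>v (G *\<^sub>v y)"] by simp
  thus "y \<bullet> (G *\<^sub>v y) \<le> y \<bullet> y" using resolvent_forms[OF y] K_psd[OF w] by linarith
qed

(* The resolvent dominates every orthogonal projection Q that annihilates K:
   y^T Q y = w^T Q w <= w^T w <= y^T G y. *)
lemma resolvent_dominates_projection:
  assumes Q: "orth_proj n Q" and QK: "Q * K = 0\<^sub>m n n" and y: "y \<in> carrier_vec n"
  shows "y \<bullet> (Q *\<^sub>v y) \<le> y \<bullet> (G *\<^sub>v y)"
proof -
  define w where "w = G *\<^sub>v y"
  have w: "w \<in> carrier_vec n" unfolding w_def using G_carrier y by auto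
  have Qc: "Q \<in> carrier_mat n n" using Q unfolding orth_proj_def by simp
  have "Q *\<^sub>v y = Q *\<^sub>v (w + K *\<^sub>v w)" using resolvent_forms(1)[OF y] unfolding w_def by simp
  also have "\<dots> = Q *\<^sub>v w + (Q * K) *\<^sub>v w"
    using Qc w K_carrier by (simp add: mult_add_distrib_mat_vec[of _ n n] assoc_mult_mat_vec[of _ n n _ n])
  also have "(Q * K) *\<^sub>v w = 0\<^sub>v n" unfolding QK using w by auto
  finally have Qy: "Q *\<^sub>v y = Q *\<^sub>v w" using Qc w by simp
  have "y \<bullet> (Q *\<^sub>v y) = w \<bullet> (Q *\<^sub>v w)"
    using orth_proj_quad_form(1)[OF Q y] orth_proj_quad_form(1)[OF Q w] Qy by simp
  also have "\<dots> \<le> w \<bullet> w"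
  proof -
    have "w \<bullet> ((1\<^sub>m n - Q) *\<^sub>v w) = w \<bullet> w - w \<bullet> (Q *\<^sub>v w)"
      using Qc w by (simp add: minus_mult_distrib_mat_vec[of _ n n] scalar_prod_minus_distrib[of _ n])
    thus ?thesis using orth_proj_quad_form(2)[OF orth_proj_complement[OF Q] w] by linarith
  qed
  also have "\<dots> \<le> y \<bullet> (G *\<^sub>v y)" using resolvent_bounds(1)[OF y] unfolding w_def .
  finally show ?thesis .
qed

end

lemma hat_matrix:
  fixes B :: "real mat"
  assumes B: "B \<in> carrier_mat n k" and inv: "invertible_mat (transpose_mat B * B)"
  defines "H \<equiv> B * minv (transpose_mat B * B) * transpose_mat B"
  shows "orth_proj n H" "H * B = B"
proof -
  define N where "N = transpose_mat B * B"
  have N: "N \<in> carrier_mat k k" unfolding N_def using B by auto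
  from inv[folded N_def] obtain Ni where NNi: "N * Ni = 1\<^sub>m k" and NiN: "Ni * N = 1\<^sub>m k"
    and Ni: "Ni \<in> carrier_mat k k"
    using N unfolding invertible_mat_def inverts_mat_def
    by (metis carrier_matD carrier_matI index_mult_mat(2,3) index_one_mat(2,3))
  have H: "H = B * Ni * transpose_mat B"
    unfolding H_def N_def[symmetric] minv_unique[OF N Ni NNi NiN] ..
  have "transpose_mat N = N" unfolding N_def using transpose_mult[of "transpose_mat B" k n B k] B by simp
  hence Nis: "transpose_mat Ni = Ni" by (rule inverse_symmetric[OF N Ni _ NNi NiN])
  show HB: "H * B = B"
  proof -
    have "H * B = B * (Ni * N)" unfolding H N_def using B Ni
      by (simp add: assoc_mult_mat[of _ n k _ k _ n] assoc_mult_mat[of _ n k _ n _ k]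
          assoc_mult_mat[of _ k k _ n _ k])
    thus ?thesis unfolding NiN using B by simp
  qed
  have Hc: "H \<in> carrier_mat n n" unfolding H using B Ni by auto
  have "transpose_mat H = transpose_mat (transpose_mat B) * transpose_mat (B * Ni)"
    unfolding H by (rule transpose_mult, insert B Ni, auto)
  also have "transpose_mat (B * Ni) = Ni * transpose_mat B" using transpose_mult[OF B Ni] Nis by simp
  also have "transpose_mat (transpose_mat B) * (Ni * transpose_mat B) = H"
    unfolding H using B Ni by (simp add: assoc_mult_mat[of _ n k _ k _ n])
  finally have "transpose_mat H = H" .
  moreover have "H * H = H"
  proof -
    have "H * H = (H * B) * Ni * transpose_mat B" unfolding H using B Ni
      by (simp add: assoc_mult_mat[of _ n n _ k _ n] assoc_mult_mat[of _ n k _ k _ n]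
          assoc_mult_mat[of _ n n _ k _ k])
    thus ?thesis unfolding HB by (simp add: H)
  qed
  ultimately show "orth_proj n H" using Hc unfolding orth_proj_def by simp
qed

lemma pick_bij: assumes "finite S" shows "bij_betw (pick S) {..<card S} S"
proof -
  have inj: "inj_on (pick S) {..<card S}"
  proof (rule inj_onI)
    fix a b assume "a \<in> {..<card S}" "b \<in> {..<card S}" "pick S a = pick S b"
    thus "a = b" using pick_mono[of b S a] pick_mono[of a S b] by (cases a b rule: linorder_cases) auto
  qed
  have sub: "pick S ` {..<card S} \<subseteq> S" using pick_in_set by auto
  have "card (pick S ` {..<card S}) = card S" using card_image[OF inj] by simp
  hence "pick S ` {..<card S} = S" using card_subset_eq[OF assms sub] by simp
  thus ?thesis using inj unfolding bij_betw_def by auto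
qed

definition Zmat :: "real mat \<Rightarrow> (nat \<Rightarrow> real) \<Rightarrow> nat set \<Rightarrow> real mat" where
  "Zmat X c \<gamma> = Xsub X \<gamma> * Sigma_pow c (1/2) \<gamma>"

definition Kmat :: "real mat \<Rightarrow> (nat \<Rightarrow> real) \<Rightarrow> nat set \<Rightarrow> real mat" where
  "Kmat X c \<gamma> = mat (dim_row X) (dim_row X) (\<lambda>(i,l). \<Sum>j\<in>\<gamma>. c j * X $$ (i,j) * X $$ (l,j))"

(* The factor by which det (I + K_A) grows when the disjoint set D is added to A,
   G being (I + K_A)^(-1). *)
definition Rmat :: "real mat \<Rightarrow> (nat \<Rightarrow> real) \<Rightarrow> nat set \<Rightarrow> real mat \<Rightarrow> real mat" where
  "Rmat X c D G = 1\<^sub>m (card D) + transpose_mat (Zmat X c D) * G * Zmat X c D"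

lemma Sigma_pow_carrier: "Sigma_pow c a \<gamma> \<in> carrier_mat (card \<gamma>) (card \<gamma>)"
  by (simp add: Sigma_pow_def)

locale design =
  fixes X :: "real mat" and n p :: nat and c :: "nat \<Rightarrow> real"
  assumes X: "X \<in> carrier_mat n p" and c_pos: "\<And>j. j < p \<Longrightarrow> c j > 0"
begin

lemma Xsub_carrier: assumes g: "\<gamma> \<subseteq> {..<p}" shows "Xsub X \<gamma> \<in> carrier_mat n (card \<gamma>)"
proof -
  have "{j. j < dim_col X \<and> j \<in> \<gamma>} = \<gamma>" "{i. i < dim_row X \<and> i \<in> UNIV} = {..<n}" using g X by auto
  thus ?thesis unfolding Xsub_def carrier_mat_def by (simp add: dim_submatrix)
qed

lemma Xsub_index: assumes g: "\<gamma> \<subseteq> {..<p}" and i: "i < n" and t: "t < card \<gamma>"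
  shows "Xsub X \<gamma> $$ (i,t) = X $$ (i, pick \<gamma> t)"
proof -
  have "{j. j < dim_col X \<and> j \<in> \<gamma>} = \<gamma>" "{i. i < dim_row X \<and> i \<in> UNIV} = {..<n}" using g X by auto
  thus ?thesis unfolding Xsub_def using i t by (simp add: submatrix_index pick_UNIV)
qed

lemma c_pick_pos: assumes g: "\<gamma> \<subseteq> {..<p}" and t: "t < card \<gamma>" shows "c (pick \<gamma> t) > 0"
  using pick_in_set[of t \<gamma>] t g c_pos by auto

lemma Sigma_pow_half: assumes g: "\<gamma> \<subseteq> {..<p}"
  shows "Sigma_pow c (1/2) \<gamma> = mat_diag (card \<gamma>) (\<lambda>i. sqrt (c (pick \<gamma> i)))"
  unfolding Sigma_pow_def mat_diag_def
  by (rule eq_matI, auto simp: powr_half_sqrt c_pick_pos[OF g] less_imp_le)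

lemma minv_Sigma: assumes g: "\<gamma> \<subseteq> {..<p}"
  shows "minv (Sigma c \<gamma>) = mat_diag (card \<gamma>) (\<lambda>i. 1 / c (pick \<gamma> i))"
proof (rule minv_unique[of _ "card \<gamma>"])
  have "i < card \<gamma> \<Longrightarrow> c (pick \<gamma> i) \<noteq> 0" for i using c_pick_pos[OF g] by force
  thus "Sigma c \<gamma> * mat_diag (card \<gamma>) (\<lambda>i. 1 / c (pick \<gamma> i)) = 1\<^sub>m (card \<gamma>)"
    "mat_diag (card \<gamma>) (\<lambda>i. 1 / c (pick \<gamma> i)) * Sigma c \<gamma> = 1\<^sub>m (card \<gamma>)"
    unfolding Sigma_def mat_diag_diag by (auto intro!: eq_matI simp: mat_diag_def)
qed (auto simp: Sigma_def)

lemma Zmat_carrier: assumes g: "\<gamma> \<subseteq> {..<p}" shows "Zmat X c \<gamma> \<in> carrier_mat n (card \<gamma>)"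
  unfolding Zmat_def using Xsub_carrier[OF g] Sigma_pow_carrier by auto

lemma Wmat_eq: assumes g: "\<gamma> \<subseteq> {..<p}"
  shows "Wmat X c \<gamma> = 1\<^sub>m (card \<gamma>) + transpose_mat (Zmat X c \<gamma>) * Zmat X c \<gamma>"
proof -
  let ?k = "card \<gamma>"
  define S where "S = Sigma_pow c (1/2) \<gamma>"
  define XA where "XA = Xsub X \<gamma>"
  define Si where "Si = minv (Sigma c \<gamma>)"
  have S: "S \<in> carrier_mat ?k ?k" unfolding S_def by (rule Sigma_pow_carrier)
  have XA: "XA \<in> carrier_mat n ?k" unfolding XA_def by (rule Xsub_carrier[OF g])
  have Si: "Si \<in> carrier_mat ?k ?k" unfolding Si_def minv_Sigma[OF g] by simp
  have St: "transpose_mat S = S" unfolding S_def Sigma_pow_def mat_diag_def by (rule eq_matI, auto)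
  have cp: "i < ?k \<Longrightarrow> c (pick \<gamma> i) > 0" for i using c_pick_pos[OF g] .
  have SSiS: "S * Si * S = 1\<^sub>m ?k"
    unfolding S_def Si_def minv_Sigma[OF g] Sigma_pow_half[OF g] mat_diag_diag using cp
    by (intro eq_matI, auto simp: mat_diag_def less_imp_le real_sqrt_mult[symmetric], fastforce)
  have "Wmat X c \<gamma> = S * (Si + transpose_mat XA * XA) * S"
    unfolding Wmat_def Umat_def S_def Si_def XA_def ..
  also have "\<dots> = S * Si * S + (S * transpose_mat XA) * (XA * S)"
    using S Si XA by (simp add: mult_add_distrib_mat[of _ ?k ?k] add_mult_distrib_mat[of _ ?k ?k]
        assoc_mult_mat[of _ ?k ?k _ n _ ?k] assoc_mult_mat[of _ ?k n _ ?k _ ?k]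
        assoc_mult_mat[of _ ?k ?k _ ?k _ ?k] assoc_mult_mat[of _ ?k n _ n _ ?k])
  also have "S * transpose_mat XA = transpose_mat (XA * S)" using transpose_mult[OF XA S] St by simp
  finally have "Wmat X c \<gamma> = 1\<^sub>m ?k + transpose_mat (XA * S) * (XA * S)" unfolding SSiS .
  thus ?thesis unfolding Zmat_def S_def XA_def .
qed

lemma Zmat_Zmat_t: assumes g: "\<gamma> \<subseteq> {..<p}"
  shows "Zmat X c \<gamma> * transpose_mat (Zmat X c \<gamma>) = Kmat X c \<gamma>"
proof (rule eq_matI)
  let ?k = "card \<gamma>"
  have Z: "Zmat X c \<gamma> \<in> carrier_mat n ?k" by (rule Zmat_carrier[OF g])
  have Zij: "Zmat X c \<gamma> $$ (i,t) = X $$ (i, pick \<gamma> t) * sqrt (c (pick \<gamma> t))" if "i < n" "t < ?k" for i t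
    unfolding Zmat_def Sigma_pow_half[OF g]
    using mat_diag_mult_right[OF Xsub_carrier[OF g]] Xsub_index[OF g that] that by simp
  fix i l assume "i < dim_row (Kmat X c \<gamma>)" "l < dim_col (Kmat X c \<gamma>)"
  hence i: "i < n" and l: "l < n" unfolding Kmat_def using X by auto
  have "(Zmat X c \<gamma> * transpose_mat (Zmat X c \<gamma>)) $$ (i,l) =
      (\<Sum>t<?k. Zmat X c \<gamma> $$ (i,t) * Zmat X c \<gamma> $$ (l,t))"
    using Z i l by (simp add: scalar_prod_def lessThan_atLeast0)
  also have "\<dots> = (\<Sum>t<?k. c (pick \<gamma> t) * X $$ (i, pick \<gamma> t) * X $$ (l, pick \<gamma> t))"
    using c_pick_pos[OF g] Zij i l
    by (intro sum.cong refl, auto simp: algebra_simps less_imp_le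
        real_sqrt_mult[symmetric] simp del: real_sqrt_mult)
  also have "\<dots> = (\<Sum>j\<in>\<gamma>. c j * X $$ (i,j) * X $$ (l,j))"
    using finite_subset[OF g] by (intro sum.reindex_bij_betw pick_bij) auto
  also have "\<dots> = Kmat X c \<gamma> $$ (i,l)" unfolding Kmat_def using X i l by simp
  finally show "(Zmat X c \<gamma> * transpose_mat (Zmat X c \<gamma>)) $$ (i,l) = Kmat X c \<gamma> $$ (i,l)" .
qed (insert X Zmat_carrier[OF g], auto simp: Kmat_def)

lemma Kmat_carrier: "Kmat X c \<gamma> \<in> carrier_mat n n" unfolding Kmat_def using X by auto

lemma Kmat_union: assumes "finite A" "finite D" "A \<inter> D = {}"
  shows "Kmat X c (A \<union> D) = Kmat X c A + Kmat X c D"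
  unfolding Kmat_def by (rule eq_matI, auto simp: sum.union_disjoint assms)

lemma Kmat_sym: "transpose_mat (Kmat X c \<gamma>) = Kmat X c \<gamma>"
  unfolding Kmat_def by (rule eq_matI, auto simp: mult.commute mult.left_commute)

lemma Kmat_psd: assumes g: "\<gamma> \<subseteq> {..<p}" and x: "x \<in> carrier_vec n"
  shows "0 \<le> x \<bullet> (Kmat X c \<gamma> *\<^sub>v x)"
proof -
  have Z: "Zmat X c \<gamma> \<in> carrier_mat n (card \<gamma>)" by (rule Zmat_carrier[OF g])
  have "x \<bullet> (Kmat X c \<gamma> *\<^sub>v x) = x \<bullet> (Zmat X c \<gamma> *\<^sub>v (transpose_mat (Zmat X c \<gamma>) *\<^sub>v x))"
    unfolding Zmat_Zmat_t[OF g, symmetric] using Z x by simp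
  also have "\<dots> = (transpose_mat (Zmat X c \<gamma>) *\<^sub>v x) \<bullet> (transpose_mat (Zmat X c \<gamma>) *\<^sub>v x)"
    by (rule transpose_vec_mult_scalar[symmetric], insert Z x, auto)
  finally show ?thesis using conjugate_square_ge_0_vec[of "transpose_mat (Zmat X c \<gamma>) *\<^sub>v x"] by simp
qed

lemma det_Wmat: assumes g: "\<gamma> \<subseteq> {..<p}"
  shows "det (Wmat X c \<gamma>) = det (1\<^sub>m n + Kmat X c \<gamma>)"
  unfolding Wmat_eq[OF g] Zmat_Zmat_t[OF g, symmetric]
  by (rule sylvester_det[symmetric], insert Zmat_carrier[OF g], auto)

lemma det_Kmat_ge_1: "\<gamma> \<subseteq> {..<p} \<Longrightarrow> 1 \<le> det (1\<^sub>m n + Kmat X c \<gamma>)"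
  by (rule det_one_plus_psd[OF Kmat_carrier Kmat_sym Kmat_psd])

lemma resolvent_exists: "\<gamma> \<subseteq> {..<p} \<Longrightarrow> \<exists>G. psd_resolvent n (Kmat X c \<gamma>) G"
  by (rule psd_resolvent_exists[OF Kmat_carrier Kmat_sym Kmat_psd])

(* Adding a disjoint block D to A multiplies det (I + K) by det R, R = I + Z_D^T G Z_D:
   I + K_(A u D) = (I + K_A) (I + G Z_D Z_D^T), then Sylvester's identity. *)
lemma det_split:
  assumes A: "A \<subseteq> {..<p}" and D: "D \<subseteq> {..<p}" and AD: "A \<inter> D = {}"
    and G: "psd_resolvent n (Kmat X c A) G"
  shows "det (1\<^sub>m n + Kmat X c (A \<union> D)) = det (1\<^sub>m n + Kmat X c A) * det (Rmat X c D G)"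
proof -
  interpret psd_resolvent n "Kmat X c A" G by (rule G)
  let ?I = "1\<^sub>m n + Kmat X c A"
  let ?Z = "Zmat X c D"
  let ?k = "card D"
  have I: "?I \<in> carrier_mat n n" using Kmat_carrier by auto
  have Z: "?Z \<in> carrier_mat n ?k" by (rule Zmat_carrier[OF D])
  have "1\<^sub>m n + Kmat X c (A \<union> D) = ?I + ?Z * transpose_mat ?Z"
    unfolding Kmat_union[OF finite_subset[OF A finite_lessThan] finite_subset[OF D finite_lessThan] AD] Zmat_Zmat_t[OF D]
    using Kmat_carrier by (simp add: assoc_add_mat[symmetric, of _ n n])
  also have "\<dots> = ?I * (1\<^sub>m n + (G * ?Z) * transpose_mat ?Z)"
  proof -
    have "?I * (1\<^sub>m n + (G * ?Z) * transpose_mat ?Z) = ?I * 1\<^sub>m n + ?I * ((G * ?Z) * transpose_mat ?Z)"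
      by (rule mult_add_distrib_mat, insert I G_carrier Z, auto)
    also have "?I * ((G * ?Z) * transpose_mat ?Z) = ((?I * G) * ?Z) * transpose_mat ?Z"
      using I G_carrier Z by (simp add: assoc_mult_mat[of _ n n _ n _ ?k]
          assoc_mult_mat[of _ n n _ ?k _ n] assoc_mult_mat[of _ n ?k _ n])
    finally show ?thesis unfolding right_inverse using I Z right_mult_one_mat[OF I] by simp
  qed
  finally have "det (1\<^sub>m n + Kmat X c (A \<union> D)) = det ?I * det (1\<^sub>m n + (G * ?Z) * transpose_mat ?Z)"
    using det_mult[OF I, of "1\<^sub>m n + (G * ?Z) * transpose_mat ?Z"] G_carrier Z by auto
  also have "det (1\<^sub>m n + (G * ?Z) * transpose_mat ?Z) = det (1\<^sub>m ?k + transpose_mat ?Z * (G * ?Z))"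
    by (rule sylvester_det, insert G_carrier Z, auto)
  also have "transpose_mat ?Z * (G * ?Z) = transpose_mat ?Z * G * ?Z"
    by (rule assoc_mult_mat[symmetric], insert G_carrier Z, auto)
  finally show ?thesis unfolding Rmat_def .
qed

lemma Rmat_carrier:
  assumes D: "D \<subseteq> {..<p}" and G: "psd_resolvent n K G"
  shows "Rmat X c D G \<in> carrier_mat (card D) (card D)"
  using G Zmat_carrier[OF D] unfolding Rmat_def psd_resolvent_def by auto

lemma Rmat_sym:
  assumes D: "D \<subseteq> {..<p}" and G: "psd_resolvent n K G"
  shows "transpose_mat (Rmat X c D G) = Rmat X c D G"
proof -
  interpret psd_resolvent n K G by (rule G)
  have Z: "Zmat X c D \<in> carrier_mat n (card D)" by (rule Zmat_carrier[OF D])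
  hence M: "transpose_mat (Zmat X c D) * G * Zmat X c D \<in> carrier_mat (card D) (card D)"
    using G_carrier by auto
  show ?thesis unfolding Rmat_def transpose_add[OF one_carrier_mat M]
    congruence_symmetric[OF Z G_carrier G_sym] by simp
qed

lemma Rmat_quad_form:
  assumes D: "D \<subseteq> {..<p}" and G: "psd_resolvent n K G" and v: "v \<in> carrier_vec (card D)"
  shows "v \<bullet> (Rmat X c D G *\<^sub>v v) = v \<bullet> v + (Zmat X c D *\<^sub>v v) \<bullet> (G *\<^sub>v (Zmat X c D *\<^sub>v v))"
proof -
  interpret psd_resolvent n K G by (rule G)
  have Z: "Zmat X c D \<in> carrier_mat n (card D)" by (rule Zmat_carrier[OF D])
  have M: "transpose_mat (Zmat X c D) * G * Zmat X c D \<in> carrier_mat (card D) (card D)"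
    using Z G_carrier by auto
  show ?thesis
    unfolding Rmat_def congruence_quad_form[OF Z G_carrier v, symmetric] using M v
    by (simp add: add_mult_distrib_mat_vec[of _ "card D" "card D"] scalar_prod_add_distrib[of _ "card D"])
qed

lemma det_Rmat_ge_1:
  assumes D: "D \<subseteq> {..<p}" and G: "psd_resolvent n K G"
  shows "1 \<le> det (Rmat X c D G)"
proof -
  interpret psd_resolvent n K G by (rule G)
  have "1 ^ card D \<le> det (Rmat X c D G)"
  proof (rule det_lower_bound[OF Rmat_carrier[OF D G] Rmat_sym[OF D G]])
    fix v :: "real vec" assume v: "v \<in> carrier_vec (card D)"
    have "Zmat X c D *\<^sub>v v \<in> carrier_vec n" using Zmat_carrier[OF D] v by auto
    thus "1 * (v \<bullet> v) \<le> v \<bullet> (Rmat X c D G *\<^sub>v v)"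
      unfolding Rmat_quad_form[OF D G v] using resolvent_bounds(2) by simp
  qed simp
  thus ?thesis by simp
qed

lemma Proj_facts:
  assumes A: "A \<subseteq> {..<p}" and inv: "invertible_mat (transpose_mat (Xsub X A) * Xsub X A)"
  shows "orth_proj n (Proj X A) \<and> Proj X A * Kmat X c A = Kmat X c A"
proof (cases "A = {}")
  case True
  have "Kmat X c A = 0\<^sub>m n n" unfolding True Kmat_def using X by (intro eq_matI, auto)
  thus ?thesis unfolding Proj_def orth_proj_def using True X by auto
next
  case False
  let ?k = "card A"
  note XA = Xsub_carrier[OF A]
  note hat = hat_matrix[OF XA inv]
  have P: "Proj X A = Xsub X A * minv (transpose_mat (Xsub X A) * Xsub X A) * transpose_mat (Xsub X A)"
    unfolding Proj_def using False by simp
  have Pc: "Proj X A \<in> carrier_mat n n" using hat(1) unfolding P orth_proj_def by simp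
  have S: "Sigma_pow c (1/2) A \<in> carrier_mat ?k ?k" by (rule Sigma_pow_carrier)
  have Z: "transpose_mat (Zmat X c A) \<in> carrier_mat ?k n" using Zmat_carrier[OF A] by simp
  have "Proj X A * Kmat X c A = (Proj X A * Xsub X A) * Sigma_pow c (1/2) A * transpose_mat (Zmat X c A)"
    unfolding Zmat_Zmat_t[OF A, symmetric] Zmat_def[of X c A] using Pc XA S Z
    by (simp add: assoc_mult_mat[of _ n n _ ?k _ ?k] assoc_mult_mat[of _ n ?k _ ?k _ n]
        assoc_mult_mat[of _ n n _ ?k _ n])
  also have "Proj X A * Xsub X A = Xsub X A" unfolding P by (rule hat(2))
  finally have "Proj X A * Kmat X c A = Kmat X c A"
    unfolding Zmat_Zmat_t[OF A, symmetric] Zmat_def[of X c A] .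
  thus ?thesis using hat(1) unfolding P by simp
qed

lemma Zmat_mult_vec:
  assumes D: "D \<subseteq> {..<p}" and v: "v \<in> carrier_vec (card D)"
  shows "Zmat X c D *\<^sub>v v = Xsub X D *\<^sub>v (Sigma_pow c (1/2) D *\<^sub>v v)"
  unfolding Zmat_def by (rule assoc_mult_mat_vec, insert Xsub_carrier[OF D] Sigma_pow_carrier v, auto)

lemma Sigma_half_norm:
  assumes D: "D \<subseteq> {..<p}" and v: "v \<in> carrier_vec (card D)"
  shows "(Sigma_pow c (1/2) D *\<^sub>v v) \<bullet> (Sigma_pow c (1/2) D *\<^sub>v v) = (\<Sum>t<card D. c (pick D t) * (v $ t)^2)"
  unfolding Sigma_pow_half[OF D] mat_diag_mult_vec[OF v] scalar_prod_def
  using c_pick_pos[OF D]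
  by (simp add: lessThan_atLeast0 power2_eq_square algebra_simps less_imp_le
      real_sqrt_mult[symmetric] del: real_sqrt_mult)

lemma Sigma_half_norm_lower:
  assumes D: "D \<subseteq> {..<p}" and v: "v \<in> carrier_vec (card D)" and lo: "\<And>j. j < p \<Longrightarrow> lo \<le> c j"
  shows "lo * (v \<bullet> v) \<le> (Sigma_pow c (1/2) D *\<^sub>v v) \<bullet> (Sigma_pow c (1/2) D *\<^sub>v v)"
  unfolding Sigma_half_norm[OF D v] sum_squares_vec[OF v] sum_distrib_left
  using lo pick_in_set[of _ D] D by (auto intro!: sum_mono mult_right_mono)

lemma Sigma_half_norm_upper:
  assumes D: "D \<subseteq> {..<p}" and v: "v \<in> carrier_vec (card D)" and hi: "\<And>j. j < p \<Longrightarrow> c j \<le> hi"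
  shows "(Sigma_pow c (1/2) D *\<^sub>v v) \<bullet> (Sigma_pow c (1/2) D *\<^sub>v v) \<le> hi * (v \<bullet> v)"
  unfolding Sigma_half_norm[OF D v] sum_squares_vec[OF v] sum_distrib_left
  using hi pick_in_set[of _ D] D by (auto intro!: sum_mono mult_right_mono)

(* Part (a), key estimate: for the block D = g - g0, the growth factor R is bounded below by
   (1 + n mu phi) I, since G dominates I - P_g0 and the eigenvalue condition bounds the
   quadratic form of X_D^T (I - P_g0) X_D. *)
lemma Rmat_lower_bound:
  assumes g0: "\<gamma>0 \<subseteq> {..<p}" and D: "D \<subseteq> {..<p}" and D_ne: "D \<noteq> {}"
    and inv0: "invertible_mat (transpose_mat (Xsub X \<gamma>0) * Xsub X \<gamma>0)"
    and n_pos: "n > 0" and mu: "\<mu> \<ge> 0" and phi: "\<phi> \<ge> 0" and lo: "\<And>j. j < p \<Longrightarrow> \<phi> \<le> c j"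
    and lam: "\<mu> \<le> lambda_min ((1 / real n) \<cdot>\<^sub>m
               (transpose_mat (Xsub X D) * (1\<^sub>m n - Proj X \<gamma>0) * Xsub X D))"
    and G: "psd_resolvent n (Kmat X c \<gamma>0) G"
  shows "(1 + real n * \<mu> * \<phi>) ^ card D \<le> det (Rmat X c D G)"
proof -
  interpret psd_resolvent n "Kmat X c \<gamma>0" G by (rule G)
  define Q where "Q = 1\<^sub>m n - Proj X \<gamma>0"
  have P: "orth_proj n (Proj X \<gamma>0)" and PK: "Proj X \<gamma>0 * Kmat X c \<gamma>0 = Kmat X c \<gamma>0"
    using Proj_facts[OF g0 inv0] by auto
  have Q: "orth_proj n Q" unfolding Q_def by (rule orth_proj_complement[OF P])
  have Qc: "Q \<in> carrier_mat n n" and Qs: "transpose_mat Q = Q" using Q unfolding orth_proj_def by auto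
  have QK: "Q * Kmat X c \<gamma>0 = 0\<^sub>m n n"
    unfolding Q_def using P PK Kmat_carrier[of \<gamma>0] unfolding orth_proj_def
    by (subst minus_mult_distrib_mat[of _ n n], auto)
  have k: "card D > 0" using D_ne finite_subset[OF D] by (simp add: card_gt_0_iff)
  note XD = Xsub_carrier[OF D]
  have "(1 + real n * \<mu> * \<phi>) * (v \<bullet> v) \<le> v \<bullet> (Rmat X c D G *\<^sub>v v)"
    if v: "v \<in> carrier_vec (card D)" for v
  proof -
    define s where "s = Sigma_pow c (1/2) D *\<^sub>v v"
    have s: "s \<in> carrier_vec (card D)" unfolding s_def by (rule mult_mat_vec_carrier[OF Sigma_pow_carrier v])
    have y: "Zmat X c D *\<^sub>v v = Xsub X D *\<^sub>v s" unfolding s_def by (rule Zmat_mult_vec[OF D v])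
    have "real n * \<mu> * \<phi> * (v \<bullet> v) \<le> real n * \<mu> * (s \<bullet> s)"
      using Sigma_half_norm_lower[OF D v lo, folded s_def] n_pos mu
      by (simp add: mult.assoc mult_left_mono)
    also have "\<dots> \<le> real n * lambda_min ((1 / real n) \<cdot>\<^sub>m (transpose_mat (Xsub X D) * Q * Xsub X D)) * (s \<bullet> s)"
      using lam conjugate_square_ge_0_vec[of s] unfolding Q_def by (intro mult_right_mono mult_left_mono) simp_all
    also have "\<dots> \<le> (Xsub X D *\<^sub>v s) \<bullet> (Q *\<^sub>v (Xsub X D *\<^sub>v s))"
      by (rule scaled_congruence_rayleigh(1)[OF XD Qc Qs k n_pos s])
    also have "\<dots> \<le> (Xsub X D *\<^sub>v s) \<bullet> (G *\<^sub>v (Xsub X D *\<^sub>v s))"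
      by (rule resolvent_dominates_projection[OF Q QK], insert XD s, auto)
    finally show ?thesis unfolding Rmat_quad_form[OF D G v] y by (simp add: algebra_simps)
  qed
  thus ?thesis using n_pos mu phi
    by (intro det_lower_bound[OF Rmat_carrier[OF D G] Rmat_sym[OF D G]]) auto
qed

(* Part (b), key estimate: since G <= I, the growth factor for D = g0 - g is at most
   (1 + n C phi) I, by the bound on the largest eigenvalue of X_D^T X_D / n. *)
lemma Rmat_upper_bound:
  assumes D: "D \<subseteq> {..<p}" and D_ne: "D \<noteq> {}"
    and n_pos: "n > 0" and C: "C \<ge> 0" and hi: "\<And>j. j < p \<Longrightarrow> c j \<le> \<phi>"
    and lam: "lambda_max ((1 / real n) \<cdot>\<^sub>m (transpose_mat (Xsub X D) * Xsub X D)) \<le> C"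
    and G: "psd_resolvent n K G"
  shows "det (Rmat X c D G) \<le> (1 + real n * C * \<phi>) ^ card D"
proof (rule det_upper_bound[OF Rmat_carrier[OF D G] Rmat_sym[OF D G]])
  interpret psd_resolvent n K G by (rule G)
  have k: "card D > 0" using D_ne finite_subset[OF D] by (simp add: card_gt_0_iff)
  note XD = Xsub_carrier[OF D]
  have XtX: "transpose_mat (Xsub X D) * 1\<^sub>m n * Xsub X D = transpose_mat (Xsub X D) * Xsub X D"
    using XD by simp
  fix v :: "real vec" assume v: "v \<in> carrier_vec (card D)"
  define s where "s = Sigma_pow c (1/2) D *\<^sub>v v"
  have s: "s \<in> carrier_vec (card D)" unfolding s_def by (rule mult_mat_vec_carrier[OF Sigma_pow_carrier v])
  define y where "y = Zmat X c D *\<^sub>v v"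
  have y: "y \<in> carrier_vec n" unfolding y_def using Zmat_carrier[OF D] v by auto
  have ys: "y = Xsub X D *\<^sub>v s" unfolding y_def s_def by (rule Zmat_mult_vec[OF D v])
  show "0 \<le> v \<bullet> (Rmat X c D G *\<^sub>v v)"
    unfolding Rmat_quad_form[OF D G v] using resolvent_bounds(2)[OF y] conjugate_square_ge_0_vec[of v]
    unfolding y_def by simp
  have "y \<bullet> (G *\<^sub>v y) \<le> y \<bullet> (1\<^sub>m n *\<^sub>v y)" using resolvent_bounds(3)[OF y] y by simp
  also have "\<dots> \<le> real n * lambda_max ((1 / real n) \<cdot>\<^sub>m (transpose_mat (Xsub X D) * Xsub X D)) * (s \<bullet> s)"
    using scaled_congruence_rayleigh(2)[OF XD one_carrier_mat _ k n_pos s] unfolding ys XtX by simp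
  also have "\<dots> \<le> real n * C * (s \<bullet> s)"
    using lam conjugate_square_ge_0_vec[of s] n_pos by (intro mult_right_mono) auto
  also have "\<dots> \<le> real n * C * (\<phi> * (v \<bullet> v))"
    using Sigma_half_norm_upper[OF D v hi, folded s_def] n_pos C by (intro mult_left_mono) auto
  finally show "v \<bullet> (Rmat X c D G *\<^sub>v v) \<le> (1 + real n * C * \<phi>) * (v \<bullet> v)"
    unfolding Rmat_quad_form[OF D G v] y_def[symmetric] by (simp add: algebra_simps)
qed

lemma det_ratio_lower_bound_S1:
  assumes g0: "\<gamma>0 \<subseteq> {..<p}" and g: "\<gamma> \<subseteq> {..<p}" and sub: "\<gamma>0 \<subseteq> \<gamma>" and ne: "\<gamma> \<noteq> \<gamma>0"
    and inv0: "invertible_mat (transpose_mat (Xsub X \<gamma>0) * Xsub X \<gamma>0)"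
    and n_pos: "n > 0" and mu: "\<mu> \<ge> 0" and phi: "\<phi> \<ge> 0" and lo: "\<And>j. j < p \<Longrightarrow> \<phi> \<le> c j"
    and lam: "\<mu> \<le> lambda_min ((1 / real n) \<cdot>\<^sub>m (transpose_mat (Xsub X (\<gamma> - \<gamma>0)) *
               (1\<^sub>m n - Proj X \<gamma>0) * Xsub X (\<gamma> - \<gamma>0)))"
  shows "(1 + real n * \<mu> * \<phi>) ^ card (\<gamma> - \<gamma>0) \<le> det (Wmat X c \<gamma>) / det (Wmat X c \<gamma>0)"
proof -
  obtain G where G: "psd_resolvent n (Kmat X c \<gamma>0) G" using resolvent_exists[OF g0] by auto
  have D: "\<gamma> - \<gamma>0 \<subseteq> {..<p}" and D_ne: "\<gamma> - \<gamma>0 \<noteq> {}" using g sub ne by auto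
  have "det (Wmat X c \<gamma>) = det (Wmat X c \<gamma>0) * det (Rmat X c (\<gamma> - \<gamma>0) G)"
    using det_split[OF g0 D _ G] det_Wmat[OF g] det_Wmat[OF g0] Un_Diff_cancel[of \<gamma>0 \<gamma>] sub
    by (simp add: Un_absorb1)
  moreover have "det (Wmat X c \<gamma>0) > 0" using det_Kmat_ge_1[OF g0] det_Wmat[OF g0] by simp
  ultimately show ?thesis using Rmat_lower_bound[OF g0 D D_ne inv0 n_pos mu phi lo lam G] by simp
qed

lemma det_ratio_lower_bound_S2:
  assumes g0: "\<gamma>0 \<subseteq> {..<p}" and g: "\<gamma> \<subseteq> {..<p}" and nsub: "\<not> \<gamma>0 \<subseteq> \<gamma>"
    and n_pos: "n > 0" and C: "C \<ge> 0" and hi: "\<And>j. j < p \<Longrightarrow> c j \<le> \<phi>"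
    and lam: "lambda_max ((1 / real n) \<cdot>\<^sub>m (transpose_mat (Xsub X (\<gamma>0 - \<gamma>)) * Xsub X (\<gamma>0 - \<gamma>))) \<le> C"
  shows "1 / (1 + real n * C * \<phi>) ^ card (\<gamma>0 - \<gamma>) \<le> det (Wmat X c \<gamma>) / det (Wmat X c \<gamma>0)"
proof -
  define A where "A = \<gamma> \<inter> \<gamma>0"
  have A: "A \<subseteq> {..<p}" and E: "\<gamma> - \<gamma>0 \<subseteq> {..<p}" and D: "\<gamma>0 - \<gamma> \<subseteq> {..<p}"
    and D_ne: "\<gamma>0 - \<gamma> \<noteq> {}" using g g0 nsub by (auto simp: A_def)
  obtain G where G: "psd_resolvent n (Kmat X c A) G" using resolvent_exists[OF A] by auto
  let ?I = "det (1\<^sub>m n + Kmat X c A)"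
  let ?RE = "det (Rmat X c (\<gamma> - \<gamma>0) G)" and ?RD = "det (Rmat X c (\<gamma>0 - \<gamma>) G)"
  have split: "A \<union> (\<gamma> - \<gamma>0) = \<gamma>" "A \<union> (\<gamma>0 - \<gamma>) = \<gamma>0"
    "A \<inter> (\<gamma> - \<gamma>0) = {}" "A \<inter> (\<gamma>0 - \<gamma>) = {}" by (auto simp: A_def)
  have "det (Wmat X c \<gamma>) = ?I * ?RE"
    using det_split[OF A E split(3) G] det_Wmat[OF g] unfolding split(1) by simp
  moreover have "det (Wmat X c \<gamma>0) = ?I * ?RD"
    using det_split[OF A D split(4) G] det_Wmat[OF g0] unfolding split(2) by simp
  moreover have "1 \<le> ?I" "1 \<le> ?RE" "1 \<le> ?RD"
    using det_Kmat_ge_1[OF A] det_Rmat_ge_1[OF E G] det_Rmat_ge_1[OF D G] by auto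
  moreover have "?RD \<le> (1 + real n * C * \<phi>) ^ card (\<gamma>0 - \<gamma>)"
    by (rule Rmat_upper_bound[OF D D_ne n_pos C hi lam G])
  ultimately show ?thesis by (simp add: frac_le)
qed

end

(* The invertibility hypothesis forces n > 0 as soon as p > 0: with no rows, X_{0}^T X_{0} is
   the 1 x 1 zero matrix. *)
lemma rows_pos:
  fixes X :: "real mat"
  assumes X: "X \<in> carrier_mat n p" and p: "p > 0"
    and inv: "invertible_mat (transpose_mat (Xsub X {0}) * Xsub X {0})"
  shows "n > 0"
proof (rule ccontr)
  assume "\<not> n > 0"
  have "Xsub X {0} \<in> carrier_mat n 1"
    using design.Xsub_carrier[of X n p "\<lambda>_. 1" "{0}"] X p unfolding design_def by auto
  hence "transpose_mat (Xsub X {0}) * Xsub X {0} = 0\<^sub>m 1 1"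
    using \<open>\<not> n > 0\<close> by (intro eq_matI, auto simp: scalar_prod_def)
  with inv obtain B :: "real mat" where B: "0\<^sub>m 1 1 * B = 1\<^sub>m 1"
    and B': "B * 0\<^sub>m 1 1 = 1\<^sub>m (dim_row B)"
    unfolding invertible_mat_def inverts_mat_def by auto
  have "dim_row B = 1" using arg_cong[OF B', of dim_col] by simp
  moreover have "dim_col B = 1" using arg_cong[OF B, of dim_col] by simp
  moreover have "(0\<^sub>m 1 1 * B) $$ (0,0) = (1\<^sub>m 1 :: real mat) $$ (0,0)" using B by simp
  ultimately show False by (simp add: scalar_prod_def)
qed

lemma gamma0_subset: "dim_vec \<beta>0 = p \<Longrightarrow> gamma0 \<beta>0 \<subseteq> {..<p}"
  unfolding gamma0_def by auto

lemma T2_lower_bound_S1: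
  fixes X :: "real mat"
  assumes X: "X \<in> carrier_mat n p" and beta: "dim_vec \<beta>0 = p"
    and X_inv: "\<forall>\<gamma>\<in>state_vectors p. invertible_mat (transpose_mat (Xsub X \<gamma>) * Xsub X \<gamma>)"
    and phi_pos: "0 < phi_lo" and C3: "C3 > 0"
    and inf: "C3 * real n powr (-\<delta>) \<le> (INF \<gamma>\<in>S1 p (gamma0 \<beta>0).
         lambda_min ((1 / real n) \<cdot>\<^sub>m (transpose_mat (Xsub X (\<gamma> - gamma0 \<beta>0)) *
            (1\<^sub>m n - Proj X (gamma0 \<beta>0)) * Xsub X (\<gamma> - gamma0 \<beta>0))))"
    and \<gamma>: "\<gamma> \<in> S1 p (gamma0 \<beta>0)" and c: "\<forall>j<p. phi_lo \<le> c j \<and> c j \<le> phi_hi"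
  shows "1/2 * (real (card \<gamma>) - real (card (gamma0 \<beta>0))) * ln (1 + C3 * real n powr (1 - \<delta>) * phi_lo)
           \<le> T2 X \<beta>0 c \<gamma>"
proof -
  let ?g0 = "gamma0 \<beta>0" and ?\<mu> = "C3 * real n powr (-\<delta>)"
  note g0 = gamma0_subset[OF beta]
  have g: "\<gamma> \<subseteq> {..<p}" and sub: "?g0 \<subseteq> \<gamma>" and ne: "\<gamma> \<noteq> ?g0"
    using \<gamma> unfolding S1_def state_vectors_def by auto
  have inv: "invertible_mat (transpose_mat (Xsub X A) * Xsub X A)" if "A \<subseteq> {..<p}" for A
    using X_inv that unfolding state_vectors_def by auto
  have n_pos: "n > 0" using rows_pos[OF X _ inv] g sub ne by (cases p) auto
  interpret design X n p c using X c phi_pos unfolding design_def by force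
  have "finite (S1 p ?g0)" unfolding S1_def state_vectors_def by simp
  hence lam: "?\<mu> \<le> lambda_min ((1 / real n) \<cdot>\<^sub>m (transpose_mat (Xsub X (\<gamma> - ?g0)) *
                (1\<^sub>m n - Proj X ?g0) * Xsub X (\<gamma> - ?g0)))"
    using inf cINF_lower[OF bdd_below_finite[OF finite_imageI] \<gamma>] by (meson order_trans)
  have "(1 + real n * ?\<mu> * phi_lo) ^ card (\<gamma> - ?g0) \<le> det (Wmat X c \<gamma>) / det (Wmat X c ?g0)"
    using C3 phi_pos c by (intro det_ratio_lower_bound_S1[OF g0 g sub ne inv[OF g0] n_pos _ _ _ lam]) auto
  moreover have t: "0 \<le> real n * ?\<mu> * phi_lo" using C3 phi_pos by simp
  ultimately have "real (card (\<gamma> - ?g0)) * ln (1 + real n * ?\<mu> * phi_lo) \<le> 2 * T2 X \<beta>0 c \<gamma>"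
    unfolding T2_def by (subst ln_realpow[symmetric]) (auto intro!: ln_mono)
  moreover have "real (card \<gamma>) - real (card ?g0) = real (card (\<gamma> - ?g0))"
    using card_Diff_subset[OF finite_subset[OF sub] sub] card_mono[of \<gamma> ?g0] sub finite_subset[OF g]
    by (simp add: of_nat_diff)
  moreover have "real n * ?\<mu> * phi_lo = C3 * real n powr (1 - \<delta>) * phi_lo"
    using n_pos by (simp add: powr_diff powr_minus divide_inverse)
  ultimately show ?thesis by simp
qed

lemma T2_lower_bound_S2:
  fixes X :: "real mat"
  assumes X: "X \<in> carrier_mat n p" and beta: "dim_vec \<beta>0 = p"
    and X_inv: "\<forall>\<gamma>\<in>state_vectors p. invertible_mat (transpose_mat (Xsub X \<gamma>) * Xsub X \<gamma>)"
    and phi_pos: "0 < phi_lo" and phi_le: "phi_lo \<le> phi_hi" and C2: "C2 > 0"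
    and ne: "gamma0 \<beta>0 \<noteq> {}" and phi_max: "phi_max X \<beta>0 \<le> C2"
    and \<gamma>: "\<gamma> \<in> S2 p (gamma0 \<beta>0)" and c: "\<forall>j<p. phi_lo \<le> c j \<and> c j \<le> phi_hi"
  shows "- (1/2) * real (card (gamma0 \<beta>0)) * ln (1 + C2 * real n * phi_hi) \<le> T2 X \<beta>0 c \<gamma>"
proof -
  let ?g0 = "gamma0 \<beta>0" and ?t = "real n * C2 * phi_hi"
  note g0 = gamma0_subset[OF beta]
  have g: "\<gamma> \<subseteq> {..<p}" and nsub: "\<not> ?g0 \<subseteq> \<gamma>" using \<gamma> unfolding S2_def state_vectors_def by auto
  have inv: "invertible_mat (transpose_mat (Xsub X A) * Xsub X A)" if "A \<subseteq> {..<p}" for A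
    using X_inv that unfolding state_vectors_def by auto
  have n_pos: "n > 0" using rows_pos[OF X _ inv] g0 ne by (cases p) auto
  interpret design X n p c using X c phi_pos unfolding design_def by force
  have "finite (S2 p ?g0)" unfolding S2_def state_vectors_def by simp
  hence "lambda_max ((1 / real (dim_row X)) \<cdot>\<^sub>m (transpose_mat (Xsub X (?g0 - \<gamma>)) * Xsub X (?g0 - \<gamma>)))
      \<le> phi_max X \<beta>0"
    unfolding phi_max_def using X \<gamma> by (intro Max_ge) auto
  hence lam: "lambda_max ((1 / real n) \<cdot>\<^sub>m (transpose_mat (Xsub X (?g0 - \<gamma>)) * Xsub X (?g0 - \<gamma>))) \<le> C2"
    using phi_max X by simp
  have ratio: "1 / (1 + ?t) ^ card (?g0 - \<gamma>) \<le> det (Wmat X c \<gamma>) / det (Wmat X c ?g0)"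
    using C2 c by (intro det_ratio_lower_bound_S2[OF g0 g nsub n_pos _ _ lam]) auto
  have t: "0 \<le> ?t" using C2 phi_pos phi_le by simp
  hence "0 < 1 / (1 + ?t) ^ card (?g0 - \<gamma>)" by simp
  from ln_mono[OF ratio this] t
  have "- (real (card (?g0 - \<gamma>)) * ln (1 + ?t)) \<le> 2 * T2 X \<beta>0 c \<gamma>"
    unfolding T2_def by (simp add: ln_realpow ln_div)
  moreover have "real (card (?g0 - \<gamma>)) * ln (1 + ?t) \<le> real (card ?g0) * ln (1 + ?t)"
    using card_mono[OF finite_subset[OF g0], of "?g0 - \<gamma>"] t by (intro mult_right_mono) auto
  ultimately show ?thesis by (simp add: mult.commute mult.left_commute)
qed

theorem lemma2:
  fixes X :: "real mat" and \<beta>0 :: "real vec" and n p :: nat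
    and phi_lo phi_hi :: real
  assumes X_dim: "X \<in> carrier_mat n p"
    and beta_dim: "dim_vec \<beta>0 = p"
    and X_inv: "\<forall>\<gamma>\<in>state_vectors p.
                  invertible_mat (transpose_mat (Xsub X \<gamma>) * Xsub X \<gamma>)"
    and phi_pos: "0 < phi_lo" and phi_le: "phi_lo \<le> phi_hi"
  shows
   "(\<forall>C3 \<delta>::real. C3 > 0 \<longrightarrow> \<delta> \<ge> 0 \<longrightarrow>
      (INF \<gamma>\<in>S1 p (gamma0 \<beta>0).
         lambda_min ((1 / real n) \<cdot>\<^sub>m
           (transpose_mat (Xsub X (\<gamma> - gamma0 \<beta>0)) *
            (1\<^sub>m n - Proj X (gamma0 \<beta>0)) * Xsub X (\<gamma> - gamma0 \<beta>0))))
        \<ge> C3 * real n powr (-\<delta>) \<longrightarrow>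
      (\<forall>\<gamma>\<in>S1 p (gamma0 \<beta>0). \<forall>c::nat\<Rightarrow>real.
         (\<forall>j<p. phi_lo \<le> c j \<and> c j \<le> phi_hi) \<longrightarrow>
         T2 X \<beta>0 c \<gamma> \<ge>
           1/2 * (real (card \<gamma>) - real (card (gamma0 \<beta>0))) *
             ln (1 + C3 * real n powr (1 - \<delta>) * phi_lo)))
    \<and>
    (\<forall>C2::real. C2 > 0 \<longrightarrow> gamma0 \<beta>0 \<noteq> {} \<longrightarrow> phi_max X \<beta>0 \<le> C2 \<longrightarrow>
      (\<forall>\<gamma>\<in>S2 p (gamma0 \<beta>0). \<forall>c::nat\<Rightarrow>real.
         (\<forall>j<p. phi_lo \<le> c j \<and> c j \<le> phi_hi) \<longrightarrow>
         T2 X \<beta>0 c \<gamma> \<ge>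
           - (1/2) * real (card (gamma0 \<beta>0)) * ln (1 + C2 * real n * phi_hi)))"
proof (intro conjI allI impI ballI)
  fix C3 \<delta> :: real and \<gamma> c
  assume "C3 > 0" and "C3 * real n powr (-\<delta>) \<le> (INF \<gamma>\<in>S1 p (gamma0 \<beta>0).
      lambda_min ((1 / real n) \<cdot>\<^sub>m (transpose_mat (Xsub X (\<gamma> - gamma0 \<beta>0)) *
        (1\<^sub>m n - Proj X (gamma0 \<beta>0)) * Xsub X (\<gamma> - gamma0 \<beta>0))))"
    and "\<gamma> \<in> S1 p (gamma0 \<beta>0)" and "\<forall>j<p. phi_lo \<le> c j \<and> c j \<le> phi_hi"
  thus "1/2 * (real (card \<gamma>) - real (card (gamma0 \<beta>0))) * ln (1 + C3 * real n powr (1 - \<delta>) * phi_lo)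
      \<le> T2 X \<beta>0 c \<gamma>"
    by (rule T2_lower_bound_S1[OF X_dim beta_dim X_inv phi_pos])
next
  fix C2 :: real and \<gamma> c
  assume "C2 > 0" "gamma0 \<beta>0 \<noteq> {}" "phi_max X \<beta>0 \<le> C2" "\<gamma> \<in> S2 p (gamma0 \<beta>0)"
    "\<forall>j<p. phi_lo \<le> c j \<and> c j \<le> phi_hi"
  thus "- (1/2) * real (card (gamma0 \<beta>0)) * ln (1 + C2 * real n * phi_hi) \<le> T2 X \<beta>0 c \<gamma>"
    by (rule T2_lower_bound_S2[OF X_dim beta_dim X_inv phi_pos phi_le])
qed

end
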